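(* $M_{2^\infty}(\mathbb{C})$ is a maximal $C^*$-subalgebra of $M_{2^\infty}(C(\mathbb{T}))$; concretely, $\mathcal{F}_2$ is a maximal $C^*$-subalgebra of $\mathcal{B}_2$, i.e. every $C^*$-subalgebra $C$ with $\mathcal{F}_2\subseteq C\subseteq\mathcal{B}_2$ equals $\mathcal{F}_2$ or $\mathcal{B}_2$.
   Context: $\mathcal{Q}_2$ is the universal unital $C^*$-algebra generated by a unitary $u$ and an isometry $s_2$ subject to $s_2u=u^2s_2$ and $s_2s_2^*+us_2s_2^*u^{*}=1$; write $s_{2^n}:=s_2^n$. Let $\mathcal{B}_2:=\overline{\operatorname{span}}\{u^ms_{2^n}s_{2^n}^*u^k: m,k\in\mathbb{Z},\,n\ge0\}$ (the fixed-point algebra of the gauge action $u\mapsto u$, $s_2\mapsto ts_2$, $t\in\mathbb{T}$) and $\mathcal{F}_2:=\overline{\operatorname{span}}\{u^ms_{2^n}s_{2^n}^*u^{-k}:0\le m,k\le 2^n-1,\,n\ge0\}\subseteq\mathcal{B}_2$. In the paper, $M_{2^\infty}(C(\mathbb{T}))$ denotes the Bunce–Deddens algebra of type $2^\infty$ and $M_{2^\infty}(\mathbb{C})$ the UHF (CAR) algebra of type $2^\infty$ sitting inside it, via the identification of $\mathcal{B}_2$ with $M_{2^\infty}(C(\mathbb{T}))$ under which $\mathcal{F}_2$ corresponds to $M_{2^\infty}(\mathbb{C})$. Maximal means proper with no $C^*$-subalgebra strictly in between. *)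

theory Defs
  imports "HOL-Analysis.Analysis"
begin

class cstar_algebra = real_normed_algebra_1 + banach +
  fixes scaleC :: "complex \<Rightarrow> 'a \<Rightarrow> 'a"
    and cadj :: "'a \<Rightarrow> 'a"
  assumes scaleC_of_real: "scaleC (complex_of_real r) x = scaleR r x"
    and scaleC_add_right: "scaleC a (x + y) = scaleC a x + scaleC a y"
    and scaleC_add_left: "scaleC (a + b) x = scaleC a x + scaleC b x"
    and scaleC_scaleC: "scaleC a (scaleC b x) = scaleC (a * b) x"
    and scaleC_mult_left: "scaleC a (x * y) = scaleC a x * y"
    and scaleC_mult_right: "scaleC a (x * y) = x * scaleC a y"
    and norm_scaleC: "norm (scaleC a x) = cmod a * norm x"
    and cadj_cadj: "cadj (cadj x) = x"
    and cadj_add: "cadj (x + y) = cadj x + cadj y"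
    and cadj_scaleC: "cadj (scaleC a x) = scaleC (cnj a) (cadj x)"
    and cadj_mult: "cadj (x * y) = cadj y * cadj x"
    and cstar_identity: "norm (cadj x * x) = (norm x)\<^sup>2"

definition cspan :: "'a::cstar_algebra set \<Rightarrow> 'a set" where
  "cspan S = {\<Sum>x\<in>T. scaleC (c x) x | T c. finite T \<and> T \<subseteq> S}"

definition clspan :: "'a::cstar_algebra set \<Rightarrow> 'a set" where
  "clspan S = closure (cspan S)"

definition cstar_subalgebra :: "'a::cstar_algebra set \<Rightarrow> bool" where
  "cstar_subalgebra C \<longleftrightarrow> 0 \<in> C \<and> closed C \<and>
     (\<forall>x\<in>C. \<forall>y\<in>C. x + y \<in> C \<and> x * y \<in> C) \<and>
     (\<forall>a. \<forall>x\<in>C. scaleC a x \<in> C) \<and>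
     (\<forall>x\<in>C. cadj x \<in> C)"

definition unitary :: "'a::cstar_algebra \<Rightarrow> bool" where
  "unitary u \<longleftrightarrow> cadj u * u = 1 \<and> u * cadj u = 1"

definition isometry :: "'a::cstar_algebra \<Rightarrow> bool" where
  "isometry s \<longleftrightarrow> cadj s * s = 1"

definition upow :: "'a::cstar_algebra \<Rightarrow> int \<Rightarrow> 'a" where
  "upow u m = (if 0 \<le> m then u ^ nat m else cadj u ^ nat (- m))"

definition Q2_relations :: "'a::cstar_algebra \<Rightarrow> 'a \<Rightarrow> bool" where
  "Q2_relations u s \<longleftrightarrow> unitary u \<and> isometry s \<and> s * u = u\<^sup>2 * s \<and>
     s * cadj s + u * s * cadj s * cadj u = 1"

text \<open>B_2 = closed span of u^m s_{2^n} s_{2^n}^* u^k, m,k \<in> \<int>, n \<ge> 0.\<close>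
definition B2 :: "'a::cstar_algebra \<Rightarrow> 'a \<Rightarrow> 'a set" where
  "B2 u s = clspan {upow u m * s ^ n * cadj (s ^ n) * upow u k | m k n. True}"

text \<open>F_2 = closed span of u^m s_{2^n} s_{2^n}^* u^{-k}, 0 \<le> m,k \<le> 2^n - 1.\<close>
definition F2 :: "'a::cstar_algebra \<Rightarrow> 'a \<Rightarrow> 'a set" where
  "F2 u s = clspan {upow u (int m) * s ^ n * cadj (s ^ n) * upow u (- int k) | m k n.
                     m < 2 ^ n \<and> k < 2 ^ n}"

end

theory Submission
  imports Defs
begin

text \<open>
  With \<open>P_n = s^n s^n*\<close>, the elements \<open>e_ab = u^a P_n u^-b\<close> (\<open>0 \<le> a, b < 2^n\<close>) are matrix
  units spanning a copy \<open>Fn n\<close> of \<open>M_(2^n)(\<complex>)\<close>; these algebras increase with \<open>n\<close> and exhaust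
  \<open>F_2\<close>. Every generator \<open>u^m P_n u^k\<close> of \<open>B_2\<close> equals \<open>e_ab u^(2^n t)\<close>, and \<open>u^(2^n)\<close>
  commutes with \<open>Fn n\<close>.

  Compressing by corners of \<open>Fn n\<close> turns elements of \<open>Fn n\<close> into scalars but \<open>u\<close> into
  \<open>s^n u s^n*\<close>, which is as far from the scalars as \<open>u\<close>; hence \<open>u \<notin> F_2\<close>.

  Let \<open>C\<close> be intermediate with \<open>u \<notin> C\<close> and \<open>\<delta> = dist u C > 0\<close>. Approximate \<open>x \<in> C\<close> by a
  combination \<open>y\<close> of generators of a level \<open>n\<close> so large that only \<open>t \<in> {-1, 0, 1}\<close> occur; the
  parts with \<open>t = \<plusminus>1\<close> then live in the two corners between the first and the last quarter of
  the diagonal. Cutting \<open>x\<close> down to such a corner gives an element of \<open>C\<close> close to \<open>u^(2^n) M\<close>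
  with \<open>M \<in> Fn n\<close>. As \<open>u\<close> differs from \<open>u^(2^n) P_n\<close> times a matrix unit by an element of
  \<open>Fn n\<close>, every matrix coefficient of \<open>M\<close> is small compared with \<open>\<delta>\<close>, so \<open>M\<close> is small and \<open>x\<close>
  is close to \<open>Fn n\<close>. Thus \<open>C = F_2\<close>; and if \<open>u \<in> C\<close>, then \<open>C = B_2\<close>.
\<close>

lemma scaleC_zero_right [simp]: "scaleC c (0::'a::cstar_algebra) = 0"
  using scaleC_add_right[of c "0::'a" 0] by simp

lemma scaleC_zero_left [simp]: "scaleC 0 (x::'a::cstar_algebra) = 0"
  using scaleC_of_real[of 0 x] by simp

lemma scaleC_one [simp]: "scaleC 1 (x::'a::cstar_algebra) = x"
  using scaleC_of_real[of 1 x] by simp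

lemma scaleC_minus_right: "scaleC c (- (x::'a::cstar_algebra)) = - scaleC c x"
  using scaleC_add_right[of c x "-x"] by (simp add: add_eq_0_iff)

lemma scaleC_diff_right: "scaleC c ((x::'a::cstar_algebra) - y) = scaleC c x - scaleC c y"
  using scaleC_add_right[of c x "-y"] by (simp add: scaleC_minus_right)

lemma scaleC_minus_left: "scaleC (- c) (x::'a::cstar_algebra) = - scaleC c x"
  using scaleC_add_left[of c "-c" x] by (simp add: add_eq_0_iff)

lemma scaleC_diff_left: "scaleC (c - d) (x::'a::cstar_algebra) = scaleC c x - scaleC d x"
  using scaleC_add_left[of c "-d" x] by (simp add: scaleC_minus_left)

lemma scaleC_sum_right: "scaleC c (sum f A) = (\<Sum>i\<in>A. scaleC c (f i::'a::cstar_algebra))"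
  by (induction A rule: infinite_finite_induct) (auto simp: scaleC_add_right)

lemma mult_scaleC_right: "(x::'a::cstar_algebra) * scaleC c y = scaleC c (x * y)"
  by (simp add: scaleC_mult_right)

lemma mult_scaleC_left: "scaleC c (x::'a::cstar_algebra) * y = scaleC c (x * y)"
  by (simp add: scaleC_mult_left)

lemma cadj_zero [simp]: "cadj (0::'a::cstar_algebra) = 0"
  using cadj_add[of "0::'a" 0] by simp

lemma cadj_minus: "cadj (- (x::'a::cstar_algebra)) = - cadj x"
  using cadj_add[of x "-x"] by (simp add: add_eq_0_iff)

lemma cadj_diff: "cadj ((x::'a::cstar_algebra) - y) = cadj x - cadj y"
  using cadj_add[of x "-y"] by (simp add: cadj_minus)

lemma cadj_sum: "cadj (sum f A) = (\<Sum>i\<in>A. cadj (f i::'a::cstar_algebra))"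
  by (induction A rule: infinite_finite_induct) (auto simp: cadj_add)

lemma cadj_one [simp]: "cadj (1::'a::cstar_algebra) = 1"
  using cadj_mult[of "cadj (1::'a)" 1] by (simp add: cadj_cadj)

lemma cadj_power: "cadj ((x::'a::cstar_algebra) ^ n) = cadj x ^ n"
  by (induction n) (auto simp: cadj_mult power_commutes)

lemma cadj_scaleR: "cadj (scaleR r (x::'a::cstar_algebra)) = scaleR r (cadj x)"
  using cadj_scaleC[of "complex_of_real r" x] by (simp add: scaleC_of_real)

lemma norm_le_norm_cadj: "norm (x::'a::cstar_algebra) \<le> norm (cadj x)"
proof (cases "x = 0")
  case False
  have "norm x * norm x = norm (cadj x * x)" by (simp add: cstar_identity power2_eq_square)
  also have "\<dots> \<le> norm (cadj x) * norm x" by (rule norm_mult_ineq)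
  finally show ?thesis using False by simp
qed simp

lemma norm_cadj [simp]: "norm (cadj (x::'a::cstar_algebra)) = norm x"
  using norm_le_norm_cadj[of x] norm_le_norm_cadj[of "cadj x"] by (simp add: cadj_cadj)

lemma norm_mult_cadj: "norm ((x::'a::cstar_algebra) * cadj x) = (norm x)\<^sup>2"
  using cstar_identity[of "cadj x"] by (simp add: cadj_cadj)

lemma norm_projection_le_1:
  assumes "cadj p = p" "p * p = (p::'a::cstar_algebra)"
  shows "norm p \<le> 1"
proof -
  have "norm p * norm p = norm p * 1" using cstar_identity[of p] assms by (simp add: power2_eq_square)
  then show ?thesis by (cases "norm p = 0") auto
qed

lemma norm_isometry_le_1:
  assumes "cadj s * s = (1::'a::cstar_algebra)"
  shows "norm s \<le> 1"
proof -
  have "(norm s)\<^sup>2 = 1" using cstar_identity[of s] assms by simp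
  then show ?thesis using norm_ge_zero[of s] by (auto simp: power2_eq_1_iff)
qed

lemma norm_sandwich_le:
  assumes "norm a \<le> 1" "norm c \<le> 1"
  shows "norm (a * b * (c::'a::cstar_algebra)) \<le> norm b"
proof -
  have "norm (a * b * c) \<le> norm a * norm b * norm c"
    by (metis mult_right_mono norm_ge_zero norm_mult_ineq order_trans)
  also have "\<dots> \<le> 1 * norm b * 1"
    using assms by (intro mult_mono) auto
  finally show ?thesis by simp
qed

lemma norm_power_2_power_selfadjoint:
  assumes "cadj h = (h::'a::cstar_algebra)"
  shows "norm (h ^ 2 ^ k) = norm h ^ 2 ^ k"
proof (induction k)
  case (Suc k)
  have "h ^ 2 ^ Suc k = cadj (h ^ 2 ^ k) * h ^ 2 ^ k"
    using assms by (simp add: cadj_power flip: power_add mult_2)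
  then have "norm (h ^ 2 ^ Suc k) = (norm (h ^ 2 ^ k))\<^sup>2" by (simp add: cstar_identity)
  also have "\<dots> = norm h ^ 2 ^ Suc k" using Suc by (simp add: power_mult[symmetric] mult.commute)
  finally show ?case .
qed simp

lemma bounded_linear_scaleC: "bounded_linear (\<lambda>x::'a::cstar_algebra. scaleC c x)"
proof (rule bounded_linear_intro[where K="cmod c"])
  show "scaleC c (scaleR r x) = scaleR r (scaleC c x)" for r and x :: 'a
    by (simp add: scaleC_scaleC mult.commute flip: scaleC_of_real)
qed (simp_all add: scaleC_add_right norm_scaleC mult.commute)

lemma bounded_linear_cadj: "bounded_linear (cadj :: 'a::cstar_algebra \<Rightarrow> 'a)"
  by (rule bounded_linear_intro[where K=1]) (auto simp: cadj_add cadj_scaleR)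

lemma closed_range_scaleC_one: "closed (range (\<lambda>c. scaleC c (1::'a::cstar_algebra)))"
proof -
  have "bounded_linear (\<lambda>c. scaleC c (1::'a))"
  proof (rule bounded_linear_intro[where K=1])
    show "scaleC (r *\<^sub>R c) 1 = r *\<^sub>R scaleC c (1::'a)" for r c
      by (metis scaleC_of_real scaleC_scaleC scaleR_conv_of_real)
  qed (simp_all add: scaleC_add_left norm_scaleC)
  then have "complete (range (\<lambda>c. scaleC c (1::'a)))"
    by (intro complete_isometric_image[where e=1]) (auto simp: norm_scaleC complete_UNIV)
  then show ?thesis by (simp add: complete_eq_closed)
qed

lemma le_of_power_bound:
  fixes x \<theta> K :: real
  assumes "0 \<le> \<theta>" "0 \<le> x" and bound: "\<And>k. x ^ 2 ^ Suc k \<le> K * \<theta> ^ 2 ^ Suc k"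
  shows "x \<le> \<theta>"
proof (rule ccontr)
  assume "\<not> x \<le> \<theta>"
  then have "\<theta> < x" by simp
  show False
  proof (cases "\<theta> = 0")
    case True
    then show False using bound[of 0] \<open>\<theta> < x\<close> by simp
  next
    case False
    then have "\<theta> > 0" using assms(1) by simp
    define y where "y = x / \<theta>"
    have "y > 1" using \<open>\<theta> < x\<close> \<open>\<theta> > 0\<close> by (simp add: y_def)
    obtain k :: nat where k: "K / (y - 1) < real k" using reals_Archimedean2 by blast
    define m :: nat where "m = 2 ^ Suc k"
    have "1 + real m * (y - 1) \<le> y ^ m"
      using Bernoulli_inequality[of "y - 1" m] \<open>y > 1\<close> by simp
    moreover have "y ^ m \<le> K"
      using bound[of k] \<open>\<theta> > 0\<close> by (simp add: y_def m_def power_divide divide_le_eq)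
    moreover have "k < m" unfolding m_def using less_exp[of "Suc k"] by simp
    then have "real k * (y - 1) < real m * (y - 1)" using \<open>y > 1\<close> by (simp add: of_nat_less_iff)
    moreover have "K < real k * (y - 1)" using k \<open>y > 1\<close> by (simp add: divide_less_eq)
    ultimately show False by linarith
  qed
qed

section \<open>Complex subspaces and closed spans\<close>

definition csubspace :: "'a::cstar_algebra set \<Rightarrow> bool" where
  "csubspace V \<longleftrightarrow> 0 \<in> V \<and> (\<forall>x\<in>V. \<forall>y\<in>V. x + y \<in> V) \<and> (\<forall>c. \<forall>x\<in>V. scaleC c x \<in> V)"

lemma csubspace_0: "csubspace V \<Longrightarrow> 0 \<in> V"
  and csubspace_add: "csubspace V \<Longrightarrow> x \<in> V \<Longrightarrow> y \<in> V \<Longrightarrow> x + y \<in> V"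
  and csubspace_scaleC: "csubspace V \<Longrightarrow> x \<in> V \<Longrightarrow> scaleC c x \<in> V"
  by (auto simp: csubspace_def)

lemma csubspace_sum: "csubspace V \<Longrightarrow> (\<And>i. i \<in> A \<Longrightarrow> f i \<in> V) \<Longrightarrow> sum f A \<in> V"
  by (induction A rule: infinite_finite_induct) (auto simp: csubspace_0 csubspace_add)

lemma csubspace_Int: "csubspace V \<Longrightarrow> csubspace W \<Longrightarrow> csubspace (V \<inter> W)"
  by (simp add: csubspace_def)

lemma csubspace_vimage:
  assumes "csubspace V"
    and "\<And>x y. f (x + y) = f x + f y" "\<And>c x. f (scaleC c x) = scaleC c (f x)"
  shows "csubspace {x. f x \<in> V}"
proof -
  have "f 0 = 0" using assms(3)[of 0 0] by simp
  then show ?thesis using assms by (simp add: csubspace_def)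
qed

lemma csubspace_cstar_subalgebra: "cstar_subalgebra C \<Longrightarrow> csubspace C"
  by (simp add: cstar_subalgebra_def csubspace_def)

lemma csubspace_cspan: "csubspace (cspan S)"
  unfolding csubspace_def
proof (intro conjI ballI allI)
  show "0 \<in> cspan S" unfolding cspan_def by (rule CollectI, rule exI[of _ "{}"]) auto
next
  fix x y assume "x \<in> cspan S" "y \<in> cspan S"
  then obtain T c T' c' where T: "finite T" "T \<subseteq> S" "x = (\<Sum>x\<in>T. scaleC (c x) x)"
    and T': "finite T'" "T' \<subseteq> S" "y = (\<Sum>x\<in>T'. scaleC (c' x) x)"
    unfolding cspan_def by blast
  have "x = (\<Sum>z\<in>T \<union> T'. scaleC (if z \<in> T then c z else 0) z)"
    unfolding T(3) by (rule sum.mono_neutral_cong_left) (use T T' in auto)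
  moreover have "y = (\<Sum>z\<in>T \<union> T'. scaleC (if z \<in> T' then c' z else 0) z)"
    unfolding T'(3) by (rule sum.mono_neutral_cong_left) (use T T' in auto)
  ultimately have "x + y = (\<Sum>z\<in>T \<union> T'. scaleC ((if z \<in> T then c z else 0) + (if z \<in> T' then c' z else 0)) z)"
    by (simp add: scaleC_add_left sum.distrib)
  then show "x + y \<in> cspan S" unfolding cspan_def
    by (intro CollectI exI[of _ "T \<union> T'"] exI[of _ "\<lambda>z. (if z \<in> T then c z else 0) + (if z \<in> T' then c' z else 0)"])
       (use T T' in auto)
next
  fix a x assume "x \<in> cspan S"
  then obtain T c where T: "finite T" "T \<subseteq> S" "x = (\<Sum>x\<in>T. scaleC (c x) x)"
    unfolding cspan_def by blast
  then have "scaleC a x = (\<Sum>z\<in>T. scaleC (a * c z) z)"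
    by (simp add: scaleC_sum_right scaleC_scaleC)
  then show "scaleC a x \<in> cspan S" unfolding cspan_def
    by (intro CollectI exI[of _ T] exI[of _ "\<lambda>z. a * c z"]) (use T in auto)
qed

lemma cspan_superset: "S \<subseteq> cspan S"
proof
  fix x assume "x \<in> S"
  then show "x \<in> cspan S" unfolding cspan_def
    by (intro CollectI exI[of _ "{x}"] exI[of _ "\<lambda>_. 1"]) simp
qed

lemma cspan_least: assumes "csubspace V" "S \<subseteq> V" shows "cspan S \<subseteq> V"
proof
  fix x assume "x \<in> cspan S"
  then obtain T c where T: "finite T" "T \<subseteq> S" "x = (\<Sum>x\<in>T. scaleC (c x) x)"
    unfolding cspan_def by blast
  show "x \<in> V" unfolding T(3) using T assms by (intro csubspace_sum) (auto simp: csubspace_scaleC)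
qed

lemma cspan_mono: "S \<subseteq> T \<Longrightarrow> cspan S \<subseteq> cspan T"
  using cspan_least[OF csubspace_cspan, of S T] cspan_superset[of T] by blast

lemma eventually_mem_cspan:
  assumes "\<And>n. csubspace (V n)" "\<And>y. y \<in> S \<Longrightarrow> eventually (\<lambda>n. y \<in> V n) sequentially"
    and "x \<in> cspan S"
  shows "eventually (\<lambda>n. x \<in> V n) sequentially"
proof -
  obtain T c where T: "finite T" "T \<subseteq> S" "x = (\<Sum>x\<in>T. scaleC (c x) x)"
    using assms(3) unfolding cspan_def by blast
  have "eventually (\<lambda>n. \<forall>y\<in>T. y \<in> V n) sequentially"
    using T assms(2) by (simp add: eventually_ball_finite_distrib subset_iff)
  then show ?thesis
    by (rule eventually_mono) (use assms(1) in \<open>auto simp: T(3) intro!: csubspace_sum csubspace_scaleC\<close>)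
qed

lemma cspan_mult_closed:
  assumes "\<And>x y. x \<in> S \<Longrightarrow> y \<in> S \<Longrightarrow> x * y \<in> cspan S"
    and "x \<in> cspan S" "y \<in> cspan (S::'a::cstar_algebra set)"
  shows "x * y \<in> cspan S"
proof -
  have left: "a * y \<in> cspan S" if "a \<in> S" "y \<in> cspan S" for a y
  proof -
    have "csubspace {y. a * y \<in> cspan S}"
      by (rule csubspace_vimage[OF csubspace_cspan]) (simp_all add: distrib_left mult_scaleC_right)
    then have "cspan S \<subseteq> {y. a * y \<in> cspan S}"
      by (rule cspan_least) (use assms(1) that(1) in auto)
    then show ?thesis using that(2) by auto
  qed
  have "csubspace (\<Inter>y\<in>cspan S. {x. x * y \<in> cspan S})"
    by (auto simp: csubspace_def distrib_right mult_scaleC_left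
             intro: csubspace_add[OF csubspace_cspan] csubspace_scaleC[OF csubspace_cspan]
                    csubspace_0[OF csubspace_cspan])
  then have "cspan S \<subseteq> (\<Inter>y\<in>cspan S. {x. x * y \<in> cspan S})"
    by (rule cspan_least) (use left in auto)
  then show ?thesis using assms(2,3) by auto
qed

lemma cspan_cadj_closed:
  assumes "\<And>x. x \<in> S \<Longrightarrow> cadj x \<in> S" and "x \<in> cspan (S::'a::cstar_algebra set)"
  shows "cadj x \<in> cspan S"
proof -
  have "csubspace {x. cadj x \<in> cspan S}"
    using csubspace_cspan[of S] by (simp add: csubspace_def cadj_add cadj_scaleC)
  then have "cspan S \<subseteq> {x. cadj x \<in> cspan S}"
    by (rule cspan_least) (use assms(1) cspan_superset in auto)
  then show ?thesis using assms(2) by auto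
qed

lemma csubspace_closure: assumes "csubspace V" shows "csubspace (closure V)"
  unfolding csubspace_def
proof (intro conjI ballI allI)
  show "0 \<in> closure V" using csubspace_0[OF assms] closure_subset by blast
next
  fix x y assume "x \<in> closure V" "y \<in> closure V"
  then obtain f g where "\<forall>n. f n \<in> V" "f \<longlonglongrightarrow> x" "\<forall>n. g n \<in> V" "g \<longlonglongrightarrow> y"
    unfolding closure_sequential by blast
  then show "x + y \<in> closure V" unfolding closure_sequential
    by (intro exI[of _ "\<lambda>n. f n + g n"]) (auto intro: tendsto_add csubspace_add[OF assms])
next
  fix c x assume "x \<in> closure V"
  then obtain f where "\<forall>n. f n \<in> V" "f \<longlonglongrightarrow> x" unfolding closure_sequential by blast
  then show "scaleC c x \<in> closure V" unfolding closure_sequential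
    by (intro exI[of _ "\<lambda>n. scaleC c (f n)"])
       (auto intro: bounded_linear.tendsto[OF bounded_linear_scaleC] csubspace_scaleC[OF assms])
qed

lemma closure_mult_closed:
  assumes "\<And>x y. x \<in> V \<Longrightarrow> y \<in> V \<Longrightarrow> x * y \<in> V" "x \<in> closure V" "y \<in> closure V"
  shows "x * y \<in> closure (V::'a::cstar_algebra set)"
proof -
  obtain f g where "\<forall>n. f n \<in> V" "f \<longlonglongrightarrow> x" "\<forall>n. g n \<in> V" "g \<longlonglongrightarrow> y"
    using assms(2,3) unfolding closure_sequential by blast
  then show ?thesis unfolding closure_sequential
    by (intro exI[of _ "\<lambda>n. f n * g n"]) (auto intro: tendsto_mult assms(1))
qed

lemma closure_cadj_closed:
  assumes "\<And>x. x \<in> V \<Longrightarrow> cadj x \<in> V" "x \<in> closure V"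
  shows "cadj x \<in> closure (V::'a::cstar_algebra set)"
proof -
  obtain f where "\<forall>n. f n \<in> V" "f \<longlonglongrightarrow> x"
    using assms(2) unfolding closure_sequential by blast
  then show ?thesis unfolding closure_sequential
    by (intro exI[of _ "\<lambda>n. cadj (f n)"])
       (auto intro: bounded_linear.tendsto[OF bounded_linear_cadj] assms(1))
qed

lemma cstar_subalgebra_clspan_exhausted:
  assumes "\<And>x. x \<in> S \<Longrightarrow> cadj x \<in> S"
    and "\<And>x. x \<in> S \<Longrightarrow> eventually (\<lambda>n. x \<in> W n) sequentially"
    and "\<And>n x y. x \<in> W n \<Longrightarrow> y \<in> W n \<Longrightarrow> x * y \<in> W n" "\<And>n. W n \<subseteq> cspan S"
  shows "cstar_subalgebra (clspan S)"
proof -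
  have mult: "x * y \<in> cspan S" if "x \<in> cspan S" "y \<in> cspan S" for x y
  proof (rule cspan_mult_closed[OF _ that])
    fix x y assume "x \<in> S" "y \<in> S"
    then have "eventually (\<lambda>n. x \<in> W n \<and> y \<in> W n) sequentially"
      using assms(2) by (simp add: eventually_conj)
    then obtain n where "x \<in> W n" "y \<in> W n" by (auto simp: eventually_sequentially)
    then show "x * y \<in> cspan S" using assms(3,4) by blast
  qed
  have "csubspace (clspan S)" unfolding clspan_def by (rule csubspace_closure[OF csubspace_cspan])
  moreover have "x * y \<in> clspan S" if "x \<in> clspan S" "y \<in> clspan S" for x y
    using closure_mult_closed[OF mult] that unfolding clspan_def by blast
  moreover have "cadj x \<in> clspan S" if "x \<in> clspan S" for x
    using closure_cadj_closed[OF cspan_cadj_closed[OF assms(1)]] that unfolding clspan_def by blast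
  ultimately show ?thesis unfolding cstar_subalgebra_def csubspace_def
    by (simp add: clspan_def)
qed

lemma clspan_least: "cstar_subalgebra C \<Longrightarrow> S \<subseteq> C \<Longrightarrow> clspan S \<subseteq> C"
  unfolding clspan_def using cspan_least[of C S] csubspace_cstar_subalgebra[of C]
  by (simp add: closure_minimal cstar_subalgebra_def)

lemma clspan_approx:
  assumes "x \<in> clspan S" "e > 0"
  shows "\<exists>y\<in>cspan S. norm (x - y) < e"
  using assms unfolding clspan_def closure_approachable dist_norm by (metis norm_minus_commute)

section \<open>Consequences of the relations of Q_2\<close>

lemma pow2_Suc_dvd_iff: "(2::int) ^ Suc n dvd l \<longleftrightarrow> 2 ^ n dvd l \<and> even (l div 2 ^ n)"
proof
  assume "2 ^ Suc n dvd l"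
  then obtain k where "l = 2 ^ n * (2 * k)" by (auto simp: power_Suc2 mult.assoc elim!: dvdE)
  then show "2 ^ n dvd l \<and> even (l div 2 ^ n)" by simp
next
  assume "2 ^ n dvd l \<and> even (l div 2 ^ n)"
  then obtain k where "l = 2 ^ n * k" "even k" by (auto elim!: dvdE)
  then show "2 ^ Suc n dvd l" by (auto simp: power_Suc2 elim!: evenE)
qed

lemma pow2_dvd_diff_iff:
  assumes "b < 2 ^ n" "c < 2 ^ n"
  shows "(2::int) ^ n dvd (int c - int b) \<longleftrightarrow> b = c"
proof
  assume dvd: "(2::int) ^ n dvd (int c - int b)"
  show "b = c"
  proof (rule ccontr)
    assume "b \<noteq> c"
    then have "2 ^ n \<le> \<bar>int c - int b\<bar>" using dvd_imp_le_int[OF _ dvd] by simp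
    moreover have "int b < 2 ^ n" "int c < 2 ^ n"
      using assms by (metis of_nat_less_iff of_nat_numeral of_nat_power)+
    ultimately show False by linarith
  qed
qed simp

lemma sum_lessThan_add:
  fixes f :: "nat \<Rightarrow> 'b::comm_monoid_add"
  shows "(\<Sum>a<m + k. f a) = (\<Sum>a<m. f a) + (\<Sum>a<k. f (a + m))"
  by (induction k) (simp_all add: ac_simps)

locale q2 =
  fixes u s :: "'a::cstar_algebra"
  assumes relations: "Q2_relations u s"
begin

lemma cadj_u_u: "cadj u * u = 1" and u_cadj_u: "u * cadj u = 1" and cadj_s_s: "cadj s * s = 1"
  and s_u: "s * u = u\<^sup>2 * s" and range_s_sum: "s * cadj s + u * s * cadj s * cadj u = 1"
  using relations by (auto simp: Q2_relations_def unitary_def isometry_def)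

lemma upow_nat: "upow u (int n) = u ^ n"
  by (simp add: upow_def)

lemma upow_neg_nat: "upow u (- int n) = cadj u ^ n"
  by (cases "n = 0") (simp_all add: upow_def)

lemma upow_0 [simp]: "upow u 0 = 1" and upow_1 [simp]: "upow u 1 = u"
  by (simp_all add: upow_def)

lemma upow_succ: "upow u (m + 1) = upow u m * u"
proof (cases m rule: int_cases2)
  case (nonneg n)
  then have "m + 1 = int (Suc n)" by simp
  then show ?thesis using nonneg by (simp only: upow_nat power_Suc2)
next
  case (nonpos n)
  show ?thesis
  proof (cases n)
    case (Suc k)
    then have "m + 1 = - int k" using nonpos by simp
    then show ?thesis using nonpos Suc by (simp only: upow_neg_nat power_Suc2 mult.assoc cadj_u_u mult_1_right)
  qed (use nonpos in simp)
qed

lemma upow_pred: "upow u (m - 1) = upow u m * cadj u"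
proof (cases m rule: int_cases2)
  case (nonpos n)
  then have "m - 1 = - int (Suc n)" by simp
  then show ?thesis using nonpos by (simp only: upow_neg_nat power_Suc2)
next
  case (nonneg n)
  show ?thesis
  proof (cases n)
    case 0
    then show ?thesis using nonneg upow_neg_nat[of 1] by simp
  next
    case (Suc k)
    then have "m - 1 = int k" using nonneg by simp
    then show ?thesis using nonneg Suc by (simp only: upow_nat power_Suc2 mult.assoc u_cadj_u mult_1_right)
  qed
qed

lemma upow_add: "upow u (a + b) = upow u a * upow u b"
proof (induction b rule: int_induct[where k=0])
  case (step1 i)
  have "upow u (a + (i + 1)) = upow u (a + i) * u" using upow_succ[of "a + i"] by (simp add: add.assoc)
  then show ?case using step1 by (simp add: upow_succ mult.assoc)
next
  case (step2 i)
  have "upow u (a + (i - 1)) = upow u (a + i) * cadj u" using upow_pred[of "a + i"] by (simp add: algebra_simps)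
  then show ?case using step2 by (simp add: upow_pred mult.assoc)
qed simp

lemma upow_inverse: "upow u m * upow u (- m) = 1"
  using upow_add[of m "- m"] by simp

lemma cadj_upow: "cadj (upow u m) = upow u (- m)"
  by (cases m rule: int_cases2) (metis cadj_cadj cadj_power minus_minus upow_nat upow_neg_nat)+

lemma norm_upow: "norm (upow u m) \<le> 1"
proof -
  have "norm (u ^ k) \<le> 1" "norm (cadj u ^ k) \<le> 1" for k
    using norm_isometry_le_1[OF cadj_u_u] norm_cadj[of u]
    by (metis norm_power_ineq order.trans power_le_one norm_ge_zero)+
  then show ?thesis by (simp add: upow_def)
qed

lemma s_cadj_u: "s * cadj u = cadj u ^ 2 * s"
proof -
  have "cadj u ^ 2 * u ^ 2 = 1" using upow_add[of "-2" 2] upow_neg_nat[of 2] upow_nat[of 2] by simp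
  then have "s * cadj u = cadj u ^ 2 * (u\<^sup>2 * s) * cadj u" by (simp flip: mult.assoc)
  also have "\<dots> = cadj u ^ 2 * s" by (simp flip: s_u add: mult.assoc u_cadj_u)
  finally show ?thesis .
qed

lemma s_upow: "s * upow u q = upow u (2 * q) * s"
proof (induction q rule: int_induct[where k=0])
  case (step1 i)
  have "s * upow u (i + 1) = upow u (2 * i) * (s * u)" using step1 by (simp add: upow_succ flip: mult.assoc)
  also have "\<dots> = upow u (2 * (i + 1)) * s"
    using upow_nat[of 2] by (simp add: s_u upow_add distrib_left mult.assoc)
  finally show ?case .
next
  case (step2 i)
  have "s * upow u (i - 1) = upow u (2 * i) * (s * cadj u)" using step2 by (simp add: upow_pred flip: mult.assoc)
  also have "\<dots> = upow u (2 * (i - 1)) * s"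
    using upow_add[of "2 * i" "-2"] upow_neg_nat[of 2] by (simp add: s_cadj_u algebra_simps)
  finally show ?case .
qed simp

lemma spow_upow: "s ^ n * upow u q = upow u (2 ^ n * q) * s ^ n"
proof (induction n arbitrary: q)
  case (Suc n)
  have "s ^ Suc n * upow u q = s * (s ^ n * upow u q)" by (simp add: mult.assoc)
  also have "\<dots> = upow u (2 ^ Suc n * q) * s ^ Suc n"
    using Suc by (simp add: s_upow mult.assoc mult.left_commute flip: mult.assoc[of s])
  finally show ?case .
qed simp

lemma cadj_spow_spow: "cadj (s ^ n) * s ^ n = 1"
proof (induction n)
  case (Suc n)
  have "cadj (s ^ Suc n) * s ^ Suc n = cadj s * (cadj (s ^ n) * s ^ n) * s"
    by (simp only: power_Suc2 cadj_mult mult.assoc)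
  then show ?case using Suc cadj_s_s by simp
qed simp

lemma norm_spow: "norm (s ^ n) \<le> 1"
  using norm_isometry_le_1[OF cadj_spow_spow] .

text \<open>The two range projections in \<open>s s* + u s s* u* = 1\<close> are orthogonal.\<close>
lemma cadj_s_u_s: "cadj s * u * s = 0"
proof -
  define z where "z = cadj s * u * s"
  have "cadj s * (s * cadj s + u * s * cadj s * cadj u) * s = cadj s * s * (cadj s * s) + z * cadj z"
    unfolding z_def by (simp add: distrib_left distrib_right mult.assoc cadj_mult cadj_cadj)
  then have "z * cadj z = 0" using range_s_sum cadj_s_s by simp
  then show ?thesis using norm_mult_cadj[of z] by (simp add: z_def)
qed

lemma cadj_s_upow_s: "cadj s * upow u l * s = (if even l then upow u (l div 2) else 0)"
proof (cases "even l")
  case True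
  then obtain q where l: "l = 2 * q" by blast
  have "cadj s * upow u l * s = cadj s * s * upow u q" by (simp add: l s_upow mult.assoc)
  then show ?thesis using l True cadj_s_s by simp
next
  case False
  then obtain q where l: "l = 1 + 2 * q" by (metis oddE add.commute)
  have "cadj s * upow u l * s = (cadj s * u * s) * upow u q" by (simp add: l upow_add s_upow mult.assoc)
  then show ?thesis using False by (simp add: cadj_s_u_s)
qed

lemma cadj_spow_upow_spow:
  "cadj (s ^ n) * upow u l * s ^ n = (if 2 ^ n dvd l then upow u (l div 2 ^ n) else 0)"
proof (induction n)
  case (Suc n)
  have "l div 2 ^ n div 2 = l div 2 ^ Suc n"
    by (simp only: power_Suc2 zdiv_zmult2_eq[OF zero_le_numeral])
  moreover have "cadj (s ^ Suc n) * upow u l * s ^ Suc n = cadj s * (cadj (s ^ n) * upow u l * s ^ n) * s"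
    by (simp only: power_Suc2 cadj_mult mult.assoc)
  ultimately show ?case using Suc.IH cadj_s_upow_s[of "l div 2 ^ n"] pow2_Suc_dvd_iff[of n l] by auto
qed (simp add: cadj_spow_spow)

definition P :: "nat \<Rightarrow> 'a" where "P n = s ^ n * cadj (s ^ n)"

definition G :: "int \<Rightarrow> nat \<Rightarrow> int \<Rightarrow> 'a" where "G m n j = upow u m * P n * upow u j"

lemma P_0: "P 0 = 1"
  by (simp add: P_def)

lemma P_idem: "P n * P n = P n"
  unfolding P_def by (simp add: mult.assoc cadj_spow_spow flip: mult.assoc[of "cadj (s ^ n)"])

lemma cadj_P: "cadj (P n) = P n"
  unfolding P_def by (simp add: cadj_mult cadj_cadj)

lemma norm_P: "norm (P n) \<le> 1"
  using norm_projection_le_1[OF cadj_P P_idem] .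

lemma upow_pow2_P: "upow u (2 ^ n) * P n = s ^ n * u * cadj (s ^ n)"
  using spow_upow[of n 1] by (simp add: P_def mult.assoc)

lemma P_upow_P: "P n * upow u l * P n = (if 2 ^ n dvd l then upow u l * P n else 0)"
proof -
  have eq: "P n * upow u l * P n = s ^ n * (cadj (s ^ n) * upow u l * s ^ n) * cadj (s ^ n)"
    unfolding P_def by (simp add: mult.assoc)
  show ?thesis
  proof (cases "2 ^ n dvd l")
    case True
    then have "2 ^ n * (l div 2 ^ n) = l" by simp
    then show ?thesis using True unfolding eq cadj_spow_upow_spow by (simp add: spow_upow P_def mult.assoc)
  qed (simp add: eq cadj_spow_upow_spow)
qed

lemma upow_P_commute: "upow u (2 ^ n * q) * P n = P n * upow u (2 ^ n * q)"
proof -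
  have "cadj (s ^ n * upow u (- q)) = cadj (upow u (2 ^ n * (- q)) * s ^ n)" by (simp add: spow_upow)
  then have cadj_spow_upow: "cadj (s ^ n) * upow u (2 ^ n * q) = upow u q * cadj (s ^ n)"
    by (simp add: cadj_mult cadj_upow)
  have "upow u (2 ^ n * q) * P n = (upow u (2 ^ n * q) * s ^ n) * cadj (s ^ n)"
    by (simp add: P_def mult.assoc)
  also have "\<dots> = s ^ n * (upow u q * cadj (s ^ n))"
    by (subst spow_upow[symmetric]) (simp only: mult.assoc)
  finally show ?thesis by (simp add: cadj_spow_upow P_def mult.assoc)
qed

lemma P_split: "P k = P (Suc k) + upow u (2 ^ k) * P (Suc k) * upow u (- (2 ^ k))"
proof -
  have su: "s ^ k * u = upow u (2 ^ k) * s ^ k" using spow_upow[of k 1] by simp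
  have "P k = s ^ k * (s * cadj s + u * s * cadj s * cadj u) * cadj (s ^ k)"
    unfolding P_def by (simp add: range_s_sum)
  also have "\<dots> = s ^ k * s * cadj (s ^ k * s) + (s ^ k * u) * s * cadj ((s ^ k * u) * s)"
    by (simp add: distrib_left distrib_right cadj_mult mult.assoc)
  also have "\<dots> = P (Suc k) + upow u (2 ^ k) * P (Suc k) * upow u (- (2 ^ k))"
    unfolding su P_def power_Suc2 by (simp only: cadj_mult cadj_upow mult.assoc)
  finally show ?thesis .
qed

lemma G_P: "upow u m * s ^ n * cadj (s ^ n) * upow u k = G m n k"
  unfolding G_def P_def by (simp add: mult.assoc)

lemma G_mult: "G a n b * G c n d = (if 2 ^ n dvd (b + c) then G (a + b + c) n d else 0)"
proof -
  have "G a n b * G c n d = upow u a * (P n * upow u (b + c) * P n) * upow u d"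
    unfolding G_def by (simp add: upow_add mult.assoc)
  also have "\<dots> = (if 2 ^ n dvd (b + c) then upow u a * (upow u (b + c) * P n) * upow u d else 0)"
    by (simp only: P_upow_P) simp
  finally show ?thesis by (simp add: G_def upow_add add.assoc mult.assoc)
qed

lemma cadj_G: "cadj (G m n j) = G (- j) n (- m)"
  unfolding G_def by (simp add: cadj_mult cadj_upow cadj_P mult.assoc)

lemma upow_G: "upow u l * G m n j = G (l + m) n j"
  unfolding G_def by (simp add: upow_add mult.assoc)

lemma G_upow: "G m n j * upow u l = G m n (j + l)"
  unfolding G_def by (simp add: upow_add mult.assoc)

lemma G_shift: "G m n j = G (m + 2 ^ n * t) n (j - 2 ^ n * t)"
proof -
  have "G (m + 2 ^ n * t) n (j - 2 ^ n * t) =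
      upow u m * (upow u (2 ^ n * t) * P n) * upow u (- (2 ^ n * t)) * upow u j"
    unfolding G_def using upow_add[of "- (2 ^ n * t)" j] by (simp add: upow_add mult.assoc)
  also have "\<dots> = upow u m * P n * (upow u (2 ^ n * t) * upow u (- (2 ^ n * t))) * upow u j"
    by (simp only: upow_P_commute mult.assoc)
  finally show ?thesis by (simp add: upow_inverse G_def)
qed

lemma upow_G_commute: "upow u (2 ^ n * q) * G m n j = G m n j * upow u (2 ^ n * q)"
  unfolding upow_G G_upow using G_shift[of m n "j + 2 ^ n * q" q] by (simp add: add.commute)

lemma G_split: "G m k j = G m (Suc k) j + G (m + 2 ^ k) (Suc k) (j - 2 ^ k)"
  using upow_add[of "- (2 ^ k)" j]
  by (simp add: G_def P_split[of k] distrib_left distrib_right upow_add mult.assoc)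

lemma norm_G: "norm (G m n j) \<le> 1"
  unfolding G_def using order_trans[OF norm_sandwich_le[OF norm_upow norm_upow] norm_P] .

lemma G_mem_by_refinement:
  assumes V: "csubspace V" and "k \<le> n" "Q m k j"
    and top: "\<And>m j. Q m n j \<Longrightarrow> G m n j \<in> V"
    and step: "\<And>m k j. k < n \<Longrightarrow> Q m k j \<Longrightarrow> Q m (Suc k) j \<and> Q (m + 2 ^ k) (Suc k) (j - 2 ^ k)"
  shows "G m k j \<in> V"
  using assms(2,3)
proof (induction "n - k" arbitrary: k m j)
  case 0
  then show ?case using top by simp
next
  case (Suc d)
  then have "Suc k \<le> n" "d = n - Suc k" by auto
  then show ?case unfolding G_split[of m k j]
    using Suc.hyps(1) Suc.prems step[of k m j] by (intro csubspace_add[OF V]) auto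
qed

section \<open>Matrix units and the algebras of level \<open>n\<close>\<close>

definition E :: "nat \<Rightarrow> nat \<Rightarrow> nat \<Rightarrow> 'a" where "E n a b = G (int a) n (- int b)"

definition Fn :: "nat \<Rightarrow> 'a set" where "Fn n = cspan {E n a b | a b. a < 2 ^ n \<and> b < 2 ^ n}"

definition Bn :: "nat \<Rightarrow> 'a set" where "Bn n = cspan {G m n k | m k. True}"

definition F2_gens :: "'a set" where "F2_gens = {E n a b | a b n. a < 2 ^ n \<and> b < 2 ^ n}"

definition B2_gens :: "'a set" where "B2_gens = {G m n k | m k n. True}"

lemma F2_eq: "F2 u s = clspan F2_gens"
  unfolding F2_def F2_gens_def G_P E_def by simp

lemma B2_eq: "B2 u s = clspan B2_gens"
  unfolding B2_def B2_gens_def G_P by simp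

lemma E_mult:
  assumes "b < 2 ^ n" "c < 2 ^ n"
  shows "E n a b * E n c d = (if b = c then E n a d else 0)"
  unfolding E_def G_mult using pow2_dvd_diff_iff[OF assms] by (auto simp: algebra_simps)

lemma cadj_E: "cadj (E n a b) = E n b a"
  unfolding E_def cadj_G by simp

lemma norm_E: "norm (E n a b) \<le> 1"
  unfolding E_def by (rule norm_G)

lemma E_0_0: "E n 0 0 = P n"
  by (simp add: E_def G_def)

lemma E_split: "E k a b = E (Suc k) a b + E (Suc k) (a + 2 ^ k) (b + 2 ^ k)"
  unfolding E_def using G_split[of "int a" k "- int b"] by (simp add: algebra_simps)

lemma sum_E_diag: "(\<Sum>a<2 ^ n. E n a a) = 1"
proof (induction n)
  case (Suc n)
  have "(\<Sum>a<2 ^ Suc n. E (Suc n) a a) =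
      (\<Sum>a<2 ^ n. E (Suc n) a a) + (\<Sum>a<2 ^ n. E (Suc n) (a + 2 ^ n) (a + 2 ^ n))"
    using sum_lessThan_add[of "\<lambda>a. E (Suc n) a a" "2 ^ n" "2 ^ n"] by (simp add: mult_2)
  also have "\<dots> = (\<Sum>a<2 ^ n. E n a a)"
    unfolding sum.distrib[symmetric] by (rule sum.cong[OF refl E_split[symmetric]])
  finally show ?case using Suc by simp
qed (simp add: E_0_0 P_0)

lemma csubspace_Fn: "csubspace (Fn n)"
  unfolding Fn_def by (rule csubspace_cspan)

lemma E_in_Fn: "a < 2 ^ n \<Longrightarrow> b < 2 ^ n \<Longrightarrow> E n a b \<in> Fn n"
  unfolding Fn_def by (rule subsetD[OF cspan_superset]) blast

lemma P_in_Fn: "P n \<in> Fn n"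
  using E_in_Fn[of 0 n 0] by (simp add: E_0_0)

lemma one_in_Fn: "1 \<in> Fn n"
  unfolding sum_E_diag[of n, symmetric] by (rule csubspace_sum[OF csubspace_Fn]) (auto intro: E_in_Fn)

lemma Fn_mult: "x \<in> Fn n \<Longrightarrow> y \<in> Fn n \<Longrightarrow> x * y \<in> Fn n"
  unfolding Fn_def
proof (rule cspan_mult_closed)
  fix x y assume "x \<in> {E n a b | a b. a < 2 ^ n \<and> b < 2 ^ n}" "y \<in> {E n a b | a b. a < 2 ^ n \<and> b < 2 ^ n}"
  then obtain a b c d where "x = E n a b" "y = E n c d" "a < 2 ^ n" "b < 2 ^ n" "c < 2 ^ n" "d < 2 ^ n"
    by blast
  then show "x * y \<in> cspan {E n a b | a b. a < 2 ^ n \<and> b < 2 ^ n}"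
    using E_in_Fn[of a n d] csubspace_0[OF csubspace_Fn] unfolding Fn_def by (simp add: E_mult)
qed

lemma Fn_cadj: "x \<in> Fn n \<Longrightarrow> cadj x \<in> Fn n"
  unfolding Fn_def by (rule cspan_cadj_closed) (use cadj_E in blast)

lemma Fn_power: "x \<in> Fn n \<Longrightarrow> x ^ k \<in> Fn n"
  by (induction k) (auto simp: one_in_Fn Fn_mult)

lemma E_mem_Fn_refine:
  assumes "k \<le> n" "a < 2 ^ k" "b < 2 ^ k"
  shows "E k a b \<in> Fn n"
proof -
  let ?Q = "\<lambda>m k j. 0 \<le> m \<and> m < 2 ^ k \<and> 0 \<le> - j \<and> - j < (2::int) ^ k"
  have "int a < 2 ^ k" "int b < 2 ^ k"
    using assms(2,3) by (metis of_nat_less_iff of_nat_numeral of_nat_power)+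
  then have "?Q (int a) k (- int b)" by simp
  moreover have "G m n j \<in> Fn n" if "?Q m n j" for m j
  proof -
    have "nat m < 2 ^ n" "nat (- j) < 2 ^ n"
      using that by (simp_all add: nat_less_iff)
    then show ?thesis using E_in_Fn[of "nat m" n "nat (- j)"] that by (simp add: E_def)
  qed
  moreover have "?Q m (Suc k) j \<and> ?Q (m + 2 ^ k) (Suc k) (j - 2 ^ k)" if "?Q m k j" for m j :: int and k
    using that power_Suc[of "2::int" k] by linarith
  ultimately show ?thesis
    unfolding E_def by (rule G_mem_by_refinement[OF csubspace_Fn assms(1), where Q = ?Q])
qed

lemma F2_gens_eventually_Fn: "x \<in> F2_gens \<Longrightarrow> eventually (\<lambda>n. x \<in> Fn n) sequentially"
  unfolding F2_gens_def eventually_sequentially by (auto intro: E_mem_Fn_refine)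

lemma Fn_subset_cspan_F2_gens: "Fn n \<subseteq> cspan F2_gens"
  unfolding Fn_def F2_gens_def by (rule cspan_mono) blast

lemma Fn_subset_F2: "Fn n \<subseteq> F2 u s"
  unfolding F2_eq clspan_def using Fn_subset_cspan_F2_gens closure_subset by blast

lemma cstar_subalgebra_F2: "cstar_subalgebra (F2 u s)"
  unfolding F2_eq
proof (rule cstar_subalgebra_clspan_exhausted[OF _ F2_gens_eventually_Fn Fn_mult Fn_subset_cspan_F2_gens])
  fix x assume "x \<in> F2_gens"
  then obtain n a b where "x = E n a b" "a < 2 ^ n" "b < 2 ^ n" unfolding F2_gens_def by blast
  then show "cadj x \<in> F2_gens"
    unfolding F2_gens_def by (intro CollectI exI[of _ b] exI[of _ a] exI[of _ n]) (simp add: cadj_E)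
qed

lemma G_mem_Bn: "k \<le> n \<Longrightarrow> G m k j \<in> Bn n"
  by (rule G_mem_by_refinement[where Q = "\<lambda>_ _ _. True"])
     (auto simp: Bn_def csubspace_cspan intro: subsetD[OF cspan_superset])

lemma Bn_mult: "x \<in> Bn n \<Longrightarrow> y \<in> Bn n \<Longrightarrow> x * y \<in> Bn n"
  unfolding Bn_def
proof (rule cspan_mult_closed)
  fix x y assume "x \<in> {G m n k | m k. True}" "y \<in> {G m n k | m k. True}"
  then obtain a b c d where "x = G a n b" "y = G c n d" by blast
  then show "x * y \<in> cspan {G m n k | m k. True}"
    using G_mem_Bn[of n n "a + b + c" d] unfolding Bn_def by (simp add: G_mult csubspace_0[OF csubspace_cspan])
qed

lemma cstar_subalgebra_B2: "cstar_subalgebra (B2 u s)"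
  unfolding B2_eq
proof (rule cstar_subalgebra_clspan_exhausted[where W = Bn])
  show "cadj x \<in> B2_gens" if "x \<in> B2_gens" for x
  proof -
    obtain m n k where "x = G m n k" using \<open>x \<in> B2_gens\<close> unfolding B2_gens_def by blast
    then show ?thesis
      unfolding B2_gens_def by (intro CollectI exI[of _ "- k"] exI[of _ "- m"] exI[of _ n]) (simp add: cadj_G)
  qed
  show "eventually (\<lambda>n. x \<in> Bn n) sequentially" if "x \<in> B2_gens" for x
    using that unfolding B2_gens_def eventually_sequentially by (auto intro: G_mem_Bn)
  show "Bn n \<subseteq> cspan B2_gens" for n
    unfolding Bn_def B2_gens_def by (rule cspan_mono) blast
qed (fact Bn_mult)

lemma F2_subset_B2: "F2 u s \<subseteq> B2 u s"
proof -
  have "F2_gens \<subseteq> B2_gens" unfolding F2_gens_def B2_gens_def E_def by blast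
  then show ?thesis unfolding F2_eq B2_eq clspan_def by (intro closure_mono cspan_mono)
qed

lemma u_in_B2: "u \<in> B2 u s"
proof -
  have "u \<in> B2_gens"
    unfolding B2_gens_def by (intro CollectI exI[of _ 1] exI[of _ 0] exI[of _ 0]) (simp add: G_def P_0)
  then show ?thesis unfolding B2_eq clspan_def using cspan_superset closure_subset by blast
qed

lemma B2_subset_if_u_mem:
  assumes C: "cstar_subalgebra C" "F2 u s \<subseteq> C" "u \<in> C"
  shows "B2 u s \<subseteq> C"
  unfolding B2_eq
proof (rule clspan_least[OF C(1)])
  have mult: "x * y \<in> C" and adj: "cadj x \<in> C" if "x \<in> C" "y \<in> C" for x y
    using C(1) that unfolding cstar_subalgebra_def by auto
  have "1 \<in> C" using C(2) Fn_subset_F2 one_in_Fn by blast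
  then have "u ^ k \<in> C" "cadj u ^ k \<in> C" for k
    using C(3) adj[of u] by (induction k) (auto intro: mult)
  then have "upow u m \<in> C" for m by (simp add: upow_def)
  moreover have "P n \<in> C" for n using C(2) Fn_subset_F2 P_in_Fn by blast
  ultimately show "B2_gens \<subseteq> C" unfolding B2_gens_def G_def by (auto intro: mult)
qed

section \<open>The unitary \<open>u\<close> is not in F_2\<close>

lemma u_not_scalar: "u \<noteq> scaleC c 1"
proof
  assume u: "u = scaleC c 1"
  have "scaleC c s = scaleC (c * c) s"
    using s_u unfolding u by (simp add: power2_eq_square mult_scaleC_left mult_scaleC_right scaleC_scaleC)
  then have "cmod (c - c * c) * norm s = 0" by (metis norm_scaleC norm_zero scaleC_diff_left right_minus_eq)
  moreover have "s \<noteq> 0" using cadj_s_s by auto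
  ultimately have "c = 0 \<or> c = 1" by (simp add: right_diff_distrib[symmetric])
  then show False
  proof
    assume "c = 0"
    then show False using u cadj_u_u by simp
  next
    assume "c = 1"
    define p where "p = s * cadj s"
    have "p * p = p" unfolding p_def by (simp add: mult.assoc flip: mult.assoc[of "cadj s"] add: cadj_s_s)
    moreover have "p + p = 1" using range_s_sum \<open>c = 1\<close> unfolding p_def u by simp
    ultimately have "p = 0" by (metis add_cancel_right_right distrib_left mult.right_neutral)
    then show False using \<open>p + p = 1\<close> by simp
  qed
qed

lemma corner_Fn_scalar: "z \<in> Fn n \<Longrightarrow> \<exists>c. P n * z * P n = scaleC c (P n)"
proof -
  let ?S = "{z. \<exists>c. P n * z * P n = scaleC c (P n)}"
  have "csubspace ?S" unfolding csubspace_def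
  proof (intro conjI ballI allI)
    show "0 \<in> ?S" by (auto intro: exI[of _ 0])
    show "x + y \<in> ?S" if "x \<in> ?S" "y \<in> ?S" for x y
      using that by (auto simp: distrib_left distrib_right scaleC_add_left intro: exI[of _ "_ + _"])
    show "scaleC a x \<in> ?S" if "x \<in> ?S" for a x
      using that by (auto simp: mult_scaleC_right mult_scaleC_left scaleC_scaleC)
  qed
  moreover have "E n a b \<in> ?S" if "a < 2 ^ n" "b < 2 ^ n" for a b
  proof -
    have "P n * E n a b * P n = (if a = 0 \<and> b = 0 then P n else 0)"
      unfolding E_0_0[symmetric] using that by (simp add: E_mult)
    then show ?thesis by (auto intro: exI[of _ 1] exI[of _ 0])
  qed
  ultimately have "Fn n \<subseteq> ?S" unfolding Fn_def by (intro cspan_least) auto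
  then show "z \<in> Fn n \<Longrightarrow> ?thesis" by auto
qed

lemma norm_le_norm_compress: "norm x \<le> norm (s ^ n * x * cadj (s ^ n))"
proof -
  have "x = cadj (s ^ n) * (s ^ n * x * cadj (s ^ n)) * s ^ n"
    by (simp add: mult.assoc cadj_spow_spow flip: mult.assoc[of "cadj (s ^ n)" "s ^ n"])
  also have "norm \<dots> \<le> norm (s ^ n * x * cadj (s ^ n))"
    by (rule norm_sandwich_le) (simp_all add: norm_spow)
  finally show ?thesis .
qed

lemma u_E_last: "u * E n (2 ^ n - 1) 0 = upow u (2 ^ n) * P n"
proof -
  have "u * E n (2 ^ n - 1) 0 = G (1 + int (2 ^ n - 1)) n 0"
    unfolding E_def using upow_G[of 1] by simp
  then show ?thesis by (simp add: G_def of_nat_diff)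
qed

text \<open>The compression \<open>x \<mapsto> P_n x e_(2^n-1,0)\<close> maps \<open>Fn n\<close> to scalars and \<open>u\<close> to \<open>s^n u s^n*\<close>.\<close>
lemma dist_scalar_le_dist_Fn:
  assumes y: "y \<in> Fn n"
  shows "\<exists>c. norm (u - scaleC c 1) \<le> norm (u - y)"
proof -
  define e where "e = E n (2 ^ n - 1) 0"
  have "e \<in> Fn n" unfolding e_def by (rule E_in_Fn) auto
  then obtain c where c: "P n * (P n * y * e) * P n = scaleC c (P n)"
    using corner_Fn_scalar Fn_mult[OF Fn_mult[OF P_in_Fn y]] by blast
  have e_P: "e * P n = e" unfolding e_def E_0_0[symmetric] by (subst E_mult) auto
  have y_e: "P n * y * e = scaleC c (P n)"
    using c by (simp add: mult.assoc e_P P_idem flip: mult.assoc[of "P n" "P n"])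
  have u_e: "P n * u * e = upow u (2 ^ n) * P n"
    unfolding e_def mult.assoc u_E_last using P_upow_P[of n "2 ^ n"] by (simp add: mult.assoc)
  have "P n * (u - y) * e = P n * u * e - P n * y * e"
    by (simp add: left_diff_distrib right_diff_distrib)
  also have "\<dots> = upow u (2 ^ n) * P n - scaleC c (P n)"
    by (simp only: u_e y_e)
  also have "\<dots> = s ^ n * (u - scaleC c 1) * cadj (s ^ n)"
    unfolding upow_pow2_P by (simp add: P_def algebra_simps mult_scaleC_left mult_scaleC_right)
  finally have "P n * (u - y) * e = s ^ n * (u - scaleC c 1) * cadj (s ^ n)" .
  then have "norm (u - scaleC c 1) \<le> norm (P n * (u - y) * e)"
    using norm_le_norm_compress[of "u - scaleC c 1" n] by simp
  also have "\<dots> \<le> norm (u - y)" unfolding e_def by (rule norm_sandwich_le[OF norm_P norm_E])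
  finally show ?thesis by blast
qed

lemma u_notin_F2: "u \<notin> F2 u s"
proof
  assume "u \<in> F2 u s"
  have "u \<in> closure (range (\<lambda>c. scaleC c 1))" unfolding closure_approachable
  proof (intro allI impI)
    fix e :: real assume "e > 0"
    then obtain y where y: "y \<in> cspan F2_gens" "norm (u - y) < e"
      using clspan_approx \<open>u \<in> F2 u s\<close> unfolding F2_eq by blast
    obtain n where "y \<in> Fn n"
      using eventually_mem_cspan[OF csubspace_Fn F2_gens_eventually_Fn y(1)]
      by (auto simp: eventually_sequentially)
    then obtain c where "norm (u - scaleC c 1) \<le> norm (u - y)" using dist_scalar_le_dist_Fn by blast
    then have "dist (scaleC c 1) u < e" using y(2) by (simp add: dist_norm norm_minus_commute)
    then show "\<exists>z\<in>range (\<lambda>c. scaleC c 1). dist z u < e" by blast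
  qed
  then have "u \<in> range (\<lambda>c. scaleC c 1)" by (simp add: closure_closed[OF closed_range_scaleC_one])
  then show False using u_not_scalar by blast
qed

section \<open>Norms in \<open>Fn n\<close> from matrix coefficients\<close>

text \<open>
  \<open>r\<close> ranges over the contractions of \<open>Fn n\<close> in the first row (\<open>P_n r = r\<close>) and \<open>t\<close> over those in
  the first column; \<open>r X t\<close> is then a multiple of \<open>P_n\<close>, so these are the matrix coefficients
  \<open>\<langle>X \<xi>, \<eta>\<rangle>\<close> of \<open>X\<close> for unit vectors \<open>\<xi>, \<eta>\<close>.
\<close>
definition corner_bound :: "nat \<Rightarrow> 'a \<Rightarrow> real \<Rightarrow> bool" where
  "corner_bound n X \<theta> \<longleftrightarrow> (\<forall>r t. r \<in> Fn n \<longrightarrow> P n * r = r \<longrightarrow> norm r \<le> 1 \<longrightarrow>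
      t \<in> Fn n \<longrightarrow> t * P n = t \<longrightarrow> norm t \<le> 1 \<longrightarrow> norm (r * X * t) \<le> \<theta>)"

lemma corner_boundI:
  assumes "\<And>r t. r \<in> Fn n \<Longrightarrow> P n * r = r \<Longrightarrow> norm r \<le> 1 \<Longrightarrow>
      t \<in> Fn n \<Longrightarrow> t * P n = t \<Longrightarrow> norm t \<le> 1 \<Longrightarrow> norm (r * X * t) \<le> \<theta>"
  shows "corner_bound n X \<theta>"
  using assms unfolding corner_bound_def by blast

lemma corner_boundD:
  "corner_bound n X \<theta> \<Longrightarrow> r \<in> Fn n \<Longrightarrow> P n * r = r \<Longrightarrow> norm r \<le> 1 \<Longrightarrow>
      t \<in> Fn n \<Longrightarrow> t * P n = t \<Longrightarrow> norm t \<le> 1 \<Longrightarrow> norm (r * X * t) \<le> \<theta>"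
  unfolding corner_bound_def by blast

lemma corner_bound_nonneg: "corner_bound n X \<theta> \<Longrightarrow> 0 \<le> \<theta>"
  using corner_boundD[of n X \<theta> 0 0] csubspace_0[OF csubspace_Fn] by simp

lemma corner_bound_cadj: "corner_bound n X \<theta> \<Longrightarrow> corner_bound n (cadj X) \<theta>"
proof (rule corner_boundI)
  fix r t assume X: "corner_bound n X \<theta>"
    and r: "r \<in> Fn n" "P n * r = r" "norm r \<le> 1" and t: "t \<in> Fn n" "t * P n = t" "norm t \<le> 1"
  have "norm (r * cadj X * t) = norm (cadj t * X * cadj r)"
    by (metis cadj_cadj cadj_mult mult.assoc norm_cadj)
  also have "\<dots> \<le> \<theta>"
  proof (rule corner_boundD[OF X])
    show "P n * cadj t = cadj t" "cadj r * P n = cadj r"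
      using r(2) t(2) by (metis cadj_P cadj_mult)+
  qed (use r t Fn_cadj in auto)
  finally show "norm (r * cadj X * t) \<le> \<theta>" .
qed

text \<open>Normalising \<open>r\<close> and testing against \<open>t = (r X)*\<close> bounds the norm of the row \<open>r X\<close>.\<close>
lemma norm_row_mult_le:
  assumes X: "X \<in> Fn n" "corner_bound n X \<theta>" and r: "r \<in> Fn n" "P n * r = r"
  shows "norm (r * X) \<le> \<theta> * norm r"
proof (cases "r * X = 0")
  case True
  then show ?thesis using corner_bound_nonneg[OF X(2)] by simp
next
  case False
  define \<rho> where "\<rho> = r * X"
  have "r \<noteq> 0" "\<rho> \<noteq> 0" using False by (auto simp: \<rho>_def)
  define a where "a = complex_of_real (1 / norm r)"
  define c where "c = complex_of_real (1 / norm \<rho>)"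
  have "norm (scaleC a r * X * scaleC c (cadj \<rho>)) \<le> \<theta>"
  proof (rule corner_boundD[OF X(2)])
    show "scaleC a r \<in> Fn n" "P n * scaleC a r = scaleC a r" "norm (scaleC a r) \<le> 1"
      using csubspace_scaleC[OF csubspace_Fn r(1)] r(2) \<open>r \<noteq> 0\<close>
      by (simp_all add: mult_scaleC_right a_def norm_scaleC norm_divide)
    show "scaleC c (cadj \<rho>) \<in> Fn n"
      unfolding \<rho>_def cadj_mult by (intro csubspace_scaleC[OF csubspace_Fn] Fn_mult Fn_cadj X r)
    have "P n * \<rho> = \<rho>" unfolding \<rho>_def using r(2) by (simp flip: mult.assoc)
    then have "cadj \<rho> * P n = cadj \<rho>" by (metis cadj_P cadj_mult)
    then show "scaleC c (cadj \<rho>) * P n = scaleC c (cadj \<rho>)" by (simp add: mult_scaleC_left)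
    show "norm (scaleC c (cadj \<rho>)) \<le> 1" using \<open>\<rho> \<noteq> 0\<close> by (simp add: c_def norm_scaleC norm_divide)
  qed
  moreover have "scaleC a r * X * scaleC c (cadj \<rho>) = scaleC (a * c) (\<rho> * cadj \<rho>)"
    unfolding \<rho>_def by (simp add: mult_scaleC_left mult_scaleC_right scaleC_scaleC mult.commute)
  then have "norm (scaleC a r * X * scaleC c (cadj \<rho>)) = norm \<rho> / norm r"
    using \<open>r \<noteq> 0\<close> \<open>\<rho> \<noteq> 0\<close>
    by (simp add: norm_scaleC norm_mult_cadj a_def c_def norm_mult norm_divide power2_eq_square field_simps)
  ultimately show ?thesis using \<open>r \<noteq> 0\<close> by (simp add: \<rho>_def divide_le_eq mult.commute)
qed

lemma norm_mult_col_le: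
  assumes X: "X \<in> Fn n" "corner_bound n X \<theta>" and t: "t \<in> Fn n" "t * P n = t"
  shows "norm (X * t) \<le> \<theta> * norm t"
proof -
  have "P n * cadj t = cadj t" using t(2) by (metis cadj_P cadj_mult)
  then have "norm (cadj t * cadj X) \<le> \<theta> * norm (cadj t)"
    using norm_row_mult_le[OF Fn_cadj[OF X(1)] corner_bound_cadj[OF X(2)] Fn_cadj[OF t(1)]] by blast
  then show ?thesis by (metis cadj_mult norm_cadj)
qed

lemma corner_bound_mult:
  assumes X: "X \<in> Fn n" "corner_bound n X \<alpha>" and Y: "Y \<in> Fn n" "corner_bound n Y \<beta>"
  shows "corner_bound n (X * Y) (\<alpha> * \<beta>)"
proof (rule corner_boundI)
  fix r t assume r: "r \<in> Fn n" "P n * r = r" "norm r \<le> 1" and t: "t \<in> Fn n" "t * P n = t" "norm t \<le> 1"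
  have "0 \<le> \<alpha>" "0 \<le> \<beta>" using corner_bound_nonneg X(2) Y(2) by auto
  have "norm (r * (X * Y) * t) \<le> norm (r * X) * norm (Y * t)"
    by (metis mult.assoc norm_mult_ineq)
  also have "\<dots> \<le> (\<alpha> * norm r) * (\<beta> * norm t)"
    using norm_row_mult_le[OF X r(1,2)] norm_mult_col_le[OF Y t(1,2)] \<open>0 \<le> \<alpha>\<close>
    by (intro mult_mono) auto
  also have "\<dots> \<le> \<alpha> * \<beta>"
    using \<open>0 \<le> \<alpha>\<close> \<open>0 \<le> \<beta>\<close> r(3) t(3) by (intro mult_mono) (auto simp: mult_left_le)
  finally show "norm (r * (X * Y) * t) \<le> \<alpha> * \<beta>" .
qed

lemma norm_le_corner_bound_crude:
  assumes X: "corner_bound n X \<theta>"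
  shows "norm X \<le> real (2 ^ n * 2 ^ n) * \<theta>"
proof -
  have "X = (\<Sum>a<2 ^ n. E n a a) * X * (\<Sum>b<2 ^ n. E n b b)" by (simp add: sum_E_diag)
  also have "\<dots> = (\<Sum>a<2 ^ n. \<Sum>b<2 ^ n. E n a a * X * E n b b)"
    by (simp add: sum_distrib_left sum_distrib_right, rule sum.swap)
  finally have X_sum: "X = (\<Sum>a<2 ^ n. \<Sum>b<2 ^ n. E n a a * X * E n b b)" .
  have entry: "norm (E n a a * X * E n b b) \<le> \<theta>" if "a < 2 ^ n" "b < 2 ^ n" for a b
  proof -
    have "E n a a * X * E n b b = E n a 0 * (E n 0 a * X * E n b 0) * E n 0 b"
      using that by (simp add: mult.assoc E_mult flip: mult.assoc[of "E n a 0"])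
    then have "norm (E n a a * X * E n b b) \<le> norm (E n 0 a * X * E n b 0)"
      using norm_sandwich_le[OF norm_E norm_E] by simp
    also have "\<dots> \<le> \<theta>"
      by (rule corner_boundD[OF X]) (use that in \<open>auto intro: E_in_Fn norm_E simp: E_0_0[symmetric] E_mult\<close>)
    finally show ?thesis .
  qed
  have "norm X \<le> (\<Sum>a<2 ^ n. \<Sum>b<2 ^ n. norm (E n a a * X * E n b b))"
    by (subst X_sum) (rule order_trans[OF norm_sum sum_mono[OF norm_sum]])
  also have "\<dots> \<le> (\<Sum>a<(2::nat) ^ n. \<Sum>b<(2::nat) ^ n. \<theta>)"
    by (intro sum_mono entry) auto
  finally show ?thesis by simp
qed

text \<open>
  The crude bound, applied to the powers \<open>(X* X)^(2^k)\<close>, whose coefficients are bounded by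
  \<open>\<theta>^(2^(k+1))\<close>, loses the factor \<open>4^n\<close> as \<open>k \<rightarrow> \<infinity>\<close> thanks to the C*-identity.
\<close>
lemma norm_le_corner_bound:
  assumes X: "X \<in> Fn n" "corner_bound n X \<theta>"
  shows "norm X \<le> \<theta>"
proof -
  define h where "h = cadj X * X"
  have h: "h \<in> Fn n" "corner_bound n h (\<theta> * \<theta>)"
    unfolding h_def using Fn_mult[OF Fn_cadj[OF X(1)] X(1)] corner_bound_mult[OF Fn_cadj[OF X(1)] corner_bound_cadj[OF X(2)] X]
    by auto
  have h_pow: "corner_bound n (h ^ 2 ^ k) ((\<theta> * \<theta>) ^ 2 ^ k)" for k
  proof (induction k)
    case (Suc k)
    have "corner_bound n (h ^ 2 ^ k * h ^ 2 ^ k) ((\<theta> * \<theta>) ^ 2 ^ k * (\<theta> * \<theta>) ^ 2 ^ k)"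
      by (rule corner_bound_mult[OF Fn_power[OF h(1)] Suc Fn_power[OF h(1)] Suc])
    then show ?case by (simp flip: power_add mult_2)
  qed (use h in simp)
  show ?thesis
  proof (rule le_of_power_bound[where K = "real (2 ^ n * 2 ^ n)"])
    show "0 \<le> \<theta>" using corner_bound_nonneg[OF X(2)] .
    fix k
    have "norm X ^ 2 ^ Suc k = norm h ^ 2 ^ k"
      unfolding h_def by (simp add: cstar_identity power_mult[symmetric])
    also have "\<dots> = norm (h ^ 2 ^ k)"
      using norm_power_2_power_selfadjoint[of h k] by (simp add: h_def cadj_mult cadj_cadj)
    also have "\<dots> \<le> real (2 ^ n * 2 ^ n) * (\<theta> * \<theta>) ^ 2 ^ k"
      by (rule norm_le_corner_bound_crude[OF h_pow])
    finally show "norm X ^ 2 ^ Suc k \<le> real (2 ^ n * 2 ^ n) * \<theta> ^ 2 ^ Suc k"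
      by (simp add: power_mult power2_eq_square)
  qed simp
qed

section \<open>Generators of large level lie in a band around \<open>Fn n\<close>\<close>

lemma Fn_upow_commute: "z \<in> Fn n \<Longrightarrow> upow u (2 ^ n * t) * z = z * upow u (2 ^ n * t)"
proof -
  have "csubspace {z. upow u (2 ^ n * t) * z - z * upow u (2 ^ n * t) \<in> {0}}"
    by (rule csubspace_vimage)
       (auto simp: csubspace_def algebra_simps mult_scaleC_left mult_scaleC_right scaleC_diff_right)
  then have "Fn n \<subseteq> {z. upow u (2 ^ n * t) * z - z * upow u (2 ^ n * t) \<in> {0}}"
    unfolding Fn_def by (rule cspan_least) (auto simp: E_def upow_G_commute)
  then show "z \<in> Fn n \<Longrightarrow> ?thesis" by auto
qed

definition diag_proj :: "nat \<Rightarrow> nat set \<Rightarrow> 'a" where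
  "diag_proj n I = (\<Sum>a\<in>I \<inter> {..<2 ^ n}. E n a a)"

definition Phead :: "nat \<Rightarrow> 'a" where "Phead n = diag_proj n {a. 4 * int a < 2 ^ n}"

definition Ptail :: "nat \<Rightarrow> 'a" where "Ptail n = diag_proj n {a. 3 * 2 ^ n \<le> 4 * int a}"

lemma diag_proj_in_Fn: "diag_proj n I \<in> Fn n"
  unfolding diag_proj_def by (rule csubspace_sum[OF csubspace_Fn]) (auto intro: E_in_Fn)

lemma diag_proj_E:
  assumes "a < 2 ^ n" "b < 2 ^ n"
  shows "diag_proj n I * E n a b = (if a \<in> I then E n a b else 0)"
proof -
  have "diag_proj n I * E n a b = (\<Sum>c\<in>I \<inter> {..<2 ^ n}. if c = a then E n c b else 0)"
    unfolding diag_proj_def sum_distrib_right using assms by (intro sum.cong) (simp_all add: E_mult)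
  then show ?thesis using assms by simp
qed

lemma E_diag_proj:
  assumes "a < 2 ^ n" "b < 2 ^ n"
  shows "E n a b * diag_proj n I = (if b \<in> I then E n a b else 0)"
proof -
  have "E n a b * diag_proj n I = (\<Sum>c\<in>I \<inter> {..<2 ^ n}. if b = c then E n a c else 0)"
    unfolding diag_proj_def sum_distrib_left using assms by (intro sum.cong) (simp_all add: E_mult)
  then show ?thesis using assms by simp
qed

lemma cadj_diag_proj: "cadj (diag_proj n I) = diag_proj n I"
  unfolding diag_proj_def by (simp add: cadj_sum cadj_E)

lemma norm_diag_proj: "norm (diag_proj n I) \<le> 1"
proof (rule norm_projection_le_1[OF cadj_diag_proj])
  have "diag_proj n I * diag_proj n I = (\<Sum>c\<in>I \<inter> {..<2 ^ n}. diag_proj n I * E n c c)"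
    by (subst (2) diag_proj_def) (rule sum_distrib_left)
  also have "\<dots> = (\<Sum>c\<in>I \<inter> {..<2 ^ n}. E n c c)"
    by (intro sum.cong) (simp_all add: diag_proj_E)
  finally show "diag_proj n I * diag_proj n I = diag_proj n I" by (simp add: diag_proj_def)
qed

text \<open>
  An element of \<open>Band n\<close> agrees with an element of \<open>Fn n\<close> except in the two corners between
  the first and the last quarter of the diagonal, where it is \<open>u^(\<plusminus>2^n)\<close> times an element of \<open>Fn n\<close>.
\<close>
definition Band :: "nat \<Rightarrow> 'a set" where
  "Band n = {y. y - Phead n * y * Ptail n - Ptail n * y * Phead n \<in> Fn n \<and>
      upow u (- (2 ^ n)) * (Phead n * y * Ptail n) \<in> Fn n \<and>
      upow u (2 ^ n) * (Ptail n * y * Phead n) \<in> Fn n}"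

lemma csubspace_Band: "csubspace (Band n)"
proof -
  have "Band n = {y. y - Phead n * y * Ptail n - Ptail n * y * Phead n \<in> Fn n} \<inter>
      {y. upow u (- (2 ^ n)) * (Phead n * y * Ptail n) \<in> Fn n} \<inter>
      {y. upow u (2 ^ n) * (Ptail n * y * Phead n) \<in> Fn n}"
    by (auto simp: Band_def)
  also have "csubspace \<dots>"
    by (intro csubspace_Int csubspace_vimage[OF csubspace_Fn])
       (simp_all add: algebra_simps mult_scaleC_left mult_scaleC_right scaleC_diff_right scaleC_add_right)
  finally show ?thesis .
qed

lemma G_eq_E_upow:
  obtains a b t where "a < 2 ^ n" "b < 2 ^ n" "G m n j = E n a b * upow u (2 ^ n * t)"
    "int a - int b + 2 ^ n * t = m + j"
proof -
  define N :: int where "N = 2 ^ n"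
  define a where "a = m mod N"
  define j' where "j' = j + N * (m div N)"
  define b where "b = (- j') mod N"
  define t where "t = - ((- j') div N)"
  have ab: "0 \<le> a" "a < N" "0 \<le> b" "b < N" unfolding a_def b_def N_def by auto
  have "G m n j = G (m - N * (m div N)) n j'"
    using G_shift[of m n j "- (m div N)"] unfolding j'_def N_def by simp
  also have "m - N * (m div N) = a" unfolding a_def by (rule minus_mult_div_eq_mod)
  also have "- j' = b + N * (- t)" unfolding b_def t_def by simp
  then have "j' = - b + N * t" by simp
  finally have "G m n j = E n (nat a) (nat b) * upow u (2 ^ n * t)"
    using ab unfolding E_def G_upow N_def by simp
  moreover have "int (nat a) - int (nat b) + 2 ^ n * t = m + j"
    using ab unfolding j'_def a_def b_def t_def N_def by (simp add: algebra_simps)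
  moreover have "nat a < 2 ^ n" "nat b < 2 ^ n" using ab unfolding N_def by (simp_all add: nat_less_iff)
  ultimately show ?thesis using that by blast
qed

lemma Phead_E_Ptail:
  "a < 2 ^ n \<Longrightarrow> b < 2 ^ n \<Longrightarrow>
    Phead n * E n a b * Ptail n = (if 4 * int a < 2 ^ n \<and> 3 * 2 ^ n \<le> 4 * int b then E n a b else 0)"
  unfolding Phead_def Ptail_def by (simp add: diag_proj_E E_diag_proj)

lemma Ptail_E_Phead:
  "a < 2 ^ n \<Longrightarrow> b < 2 ^ n \<Longrightarrow>
    Ptail n * E n a b * Phead n = (if 3 * 2 ^ n \<le> 4 * int a \<and> 4 * int b < 2 ^ n then E n a b else 0)"
  unfolding Phead_def Ptail_def by (simp add: diag_proj_E E_diag_proj)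

lemma quarter_cases [consumes 6]:
  fixes a b t x N :: int
  assumes ab: "0 \<le> a" "a < N" "0 \<le> b" "b < N" and x: "4 * \<bar>x\<bar> < N" "a - b + N * t = x"
  obtains "t = 0" "\<not> (4 * a < N \<and> 3 * N \<le> 4 * b)" "\<not> (3 * N \<le> 4 * a \<and> 4 * b < N)"
    | "t = 1" "4 * a < N \<and> 3 * N \<le> 4 * b" "\<not> (3 * N \<le> 4 * a \<and> 4 * b < N)"
    | "t = -1" "\<not> (4 * a < N \<and> 3 * N \<le> 4 * b)" "3 * N \<le> 4 * a \<and> 4 * b < N"
proof -
  have "0 < N" using ab by linarith
  obtain A where A: "x \<le> A" "- x \<le> A" "4 * A < N"
    using x(1) abs_ge_self abs_ge_minus_self by blast
  have "N * t < N * 2" using ab A x(2) by linarith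
  then have "t < 2" using \<open>0 < N\<close> by simp
  have "N * (- 2) < N * t" using ab A x(2) by linarith
  then have "- 2 < t" using mult_less_cancel_left_pos[OF \<open>0 < N\<close>, of "- 2" t] by simp
  consider "t = 0" | "t = 1" | "t = -1" using \<open>t < 2\<close> \<open>- 2 < t\<close> by linarith
  then show thesis
  proof cases
    case 1
    then have "a - b = x" using x(2) by simp
    show thesis by (rule that(1)[OF 1]) (use \<open>a - b = x\<close> A ab in linarith)+
  next
    case 2
    then have "a - b + N = x" using x(2) by simp
    show thesis by (rule that(2)[OF 2]) (use \<open>a - b + N = x\<close> A ab in linarith)+
  next
    case 3
    then have "a - b - N = x" using x(2) by simp
    show thesis by (rule that(3)[OF 3]) (use \<open>a - b - N = x\<close> A ab in linarith)+
  qed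
qed

text \<open>
  If \<open>4|m + j| < 2^n\<close>, then \<open>G m n j = e_ab u^(2^n t)\<close> with \<open>t \<in> {-1, 0, 1}\<close>, and \<open>t = 1\<close> (\<open>t = -1\<close>)
  forces \<open>a\<close> into the first (last) and \<open>b\<close> into the last (first) quarter.
\<close>
lemma G_mem_Band:
  assumes small: "4 * \<bar>m + j\<bar> < (2::int) ^ n"
  shows "G m n j \<in> Band n"
proof -
  obtain a b t where ab: "a < 2 ^ n" "b < 2 ^ n" and G: "G m n j = E n a b * upow u (2 ^ n * t)"
    and sum_eq: "int a - int b + 2 ^ n * t = m + j"
    by (rule G_eq_E_upow)
  have E: "E n a b \<in> Fn n" using E_in_Fn ab by simp
  have G_comm: "G m n j = upow u (2 ^ n * t) * E n a b" using G Fn_upow_commute[OF E] by simp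
  have corner: "p * G m n j * q = upow u (2 ^ n * t) * (p * E n a b * q)" if "p \<in> Fn n" for p q
  proof -
    have "p * G m n j * q = p * upow u (2 ^ n * t) * E n a b * q" by (simp only: G_comm mult.assoc)
    also have "p * upow u (2 ^ n * t) = upow u (2 ^ n * t) * p" using Fn_upow_commute[OF that] by simp
    finally show ?thesis by (simp only: mult.assoc)
  qed
  have "Phead n \<in> Fn n" "Ptail n \<in> Fn n"
    unfolding Phead_def Ptail_def by (simp_all add: diag_proj_in_Fn)
  note head_tail = corner[OF this(1), of "Ptail n", unfolded Phead_E_Ptail[OF ab]]
    and tail_head = corner[OF this(2), of "Phead n", unfolded Ptail_E_Phead[OF ab]]
  have "int a < 2 ^ n" "int b < 2 ^ n" using ab by (metis of_nat_less_iff of_nat_numeral of_nat_power)+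
  moreover have "0 \<le> int a" "0 \<le> int b" by simp_all
  ultimately have "0 \<le> int a" "int a < 2 ^ n" "0 \<le> int b" "int b < 2 ^ n" by blast+
  from this small sum_eq show ?thesis
  proof (cases rule: quarter_cases)
    case 1
    then show ?thesis
      using E unfolding Band_def mem_Collect_eq head_tail tail_head unfolding G
      by (auto simp: csubspace_0[OF csubspace_Fn])
  next
    case 2
    then show ?thesis
      using E unfolding Band_def mem_Collect_eq head_tail tail_head unfolding G_comm
      by (simp add: csubspace_0[OF csubspace_Fn] upow_inverse flip: mult.assoc upow_add)
  next
    case 3
    then show ?thesis
      using E unfolding Band_def mem_Collect_eq head_tail tail_head unfolding G_comm
      by (simp add: csubspace_0[OF csubspace_Fn] upow_inverse flip: mult.assoc upow_add)
  qed
qed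

lemma eventually_Band: "x \<in> cspan B2_gens \<Longrightarrow> eventually (\<lambda>n. x \<in> Band n) sequentially"
proof (rule eventually_mem_cspan[OF csubspace_Band])
  fix x assume "x \<in> B2_gens"
  then obtain m k j where x: "x = G m k j" unfolding B2_gens_def by blast
  show "eventually (\<lambda>n. x \<in> Band n) sequentially" unfolding eventually_sequentially
  proof (intro exI allI impI)
    fix n assume n: "max k (nat (4 * \<bar>m + j\<bar>)) \<le> n"
    have "int n < 2 ^ n" using less_exp[of n] by (metis of_nat_less_iff of_nat_numeral of_nat_power)
    then have "4 * \<bar>m + j\<bar> < 2 ^ n" using n by linarith
    show "x \<in> Band n" unfolding x
    proof (rule G_mem_by_refinement[OF csubspace_Band, where Q = "\<lambda>m _ j. 4 * \<bar>m + j\<bar> < 2 ^ n"])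
      show "k \<le> n" using n by simp
      show "4 * \<bar>m + j\<bar> < 2 ^ n" by fact
    qed (simp_all add: G_mem_Band)
  qed
qed

lemma Band_cadj:
  assumes "y \<in> Band n"
  shows "cadj y \<in> Band n"
proof -
  define N :: int where "N = 2 ^ n"
  define X1 where "X1 = Phead n * y * Ptail n"
  define X2 where "X2 = Ptail n * y * Phead n"
  define M1 where "M1 = upow u (- N) * X1"
  define M2 where "M2 = upow u N * X2"
  have y0: "y - X1 - X2 \<in> Fn n" and M: "M1 \<in> Fn n" "M2 \<in> Fn n"
    using assms by (simp_all add: Band_def X1_def X2_def M1_def M2_def N_def)
  have "X1 * upow u (- N) = upow u N * M1 * upow u (- N)"
    unfolding M1_def by (simp add: upow_inverse flip: mult.assoc)
  also have "\<dots> = upow u N * (M1 * upow u (- N))" by (rule mult.assoc)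
  also have "M1 * upow u (- N) = upow u (- N) * M1"
    using Fn_upow_commute[OF M(1), of "- 1"] by (simp add: N_def)
  finally have M1': "X1 * upow u (- N) = M1"
    by (simp add: upow_inverse flip: mult.assoc)
  have "X2 * upow u N = upow u (- N) * M2 * upow u N"
    using upow_inverse[of "- N"] unfolding M2_def by (simp flip: mult.assoc)
  also have "\<dots> = upow u (- N) * (M2 * upow u N)" by (rule mult.assoc)
  also have "M2 * upow u N = upow u N * M2"
    using Fn_upow_commute[OF M(2), of 1] by (simp add: N_def)
  finally have M2': "X2 * upow u N = M2"
    using upow_inverse[of "- N"] by (simp flip: mult.assoc)
  have cadj_PQ: "cadj (Phead n) = Phead n" "cadj (Ptail n) = Ptail n"
    unfolding Phead_def Ptail_def by (simp_all add: cadj_diag_proj)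
  have "cadj y - Phead n * cadj y * Ptail n - Ptail n * cadj y * Phead n = cadj (y - X1 - X2)"
    by (simp add: X1_def X2_def cadj_diff cadj_mult cadj_PQ mult.assoc)
  moreover have "upow u (- N) * (Phead n * cadj y * Ptail n) = cadj M2"
    unfolding M2'[symmetric] X2_def by (simp add: cadj_mult cadj_upow cadj_PQ mult.assoc)
  moreover have "upow u N * (Ptail n * cadj y * Phead n) = cadj M1"
    unfolding M1'[symmetric] X1_def by (simp add: cadj_mult cadj_upow cadj_PQ mult.assoc)
  ultimately show ?thesis
    using Fn_cadj[OF y0] Fn_cadj[OF M(1)] Fn_cadj[OF M(2)] unfolding Band_def N_def by simp
qed

text \<open>
  \<open>u\<close> shifts \<open>e_aa\<close> to \<open>e_(a+1,a)\<close>, except for the wrap-around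
  \<open>u e_(N-1,N-1) = u^N P_n e_(0,N-1)\<close>, \<open>N = 2^n\<close>, which leaves \<open>Fn n\<close>.
\<close>
lemma u_eq_Fn_add_wrap: "\<exists>R\<in>Fn n. u = R + upow u (2 ^ n) * P n * E n 0 (2 ^ n - 1)"
proof -
  define N :: nat where "N = 2 ^ n"
  have N: "N = Suc (N - 1)" unfolding N_def by simp
  have "u = u * (\<Sum>a<N. E n a a)" unfolding N_def by (simp add: sum_E_diag)
  also have "\<dots> = (\<Sum>a<N. u * E n a a)" by (rule sum_distrib_left)
  also have "\<dots> = (\<Sum>a<N - 1. u * E n a a) + u * E n (N - 1) (N - 1)"
    by (subst N) (simp only: sum.lessThan_Suc)
  finally have u: "u = (\<Sum>a<N - 1. u * E n a a) + u * E n (N - 1) (N - 1)" .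
  have "u * E n a a = E n (a + 1) a" for a
    unfolding E_def using upow_G[of 1 "int a" n "- int a"] by (simp add: add.commute)
  then have R: "(\<Sum>a<N - 1. u * E n a a) \<in> Fn n"
    by (intro csubspace_sum[OF csubspace_Fn]) (auto simp: N_def intro: E_in_Fn)
  have "E n (N - 1) 0 * E n 0 (N - 1) = E n (N - 1) (N - 1)"
    unfolding N_def by (subst E_mult) auto
  then have "u * E n (N - 1) (N - 1) = upow u (2 ^ n) * P n * E n 0 (N - 1)"
    unfolding N_def by (simp flip: u_E_last add: mult.assoc)
  then show ?thesis using u R unfolding N_def by auto
qed

end

section \<open>Intermediate C*-algebras not containing \<open>u\<close>\<close>

locale q2_gap = q2 +
  fixes C :: "'a set"
  assumes cstar_subalgebra_C: "cstar_subalgebra C"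
    and F2_subset_C: "F2 u s \<subseteq> C" and C_subset_B2: "C \<subseteq> B2 u s" and u_notin_C: "u \<notin> C"
begin

definition \<delta> :: real where "\<delta> = infdist u C"

lemma C_add: "x \<in> C \<Longrightarrow> y \<in> C \<Longrightarrow> x + y \<in> C"
  and C_mult: "x \<in> C \<Longrightarrow> y \<in> C \<Longrightarrow> x * y \<in> C"
  and C_cadj: "x \<in> C \<Longrightarrow> cadj x \<in> C"
  using cstar_subalgebra_C by (auto simp: cstar_subalgebra_def)

lemma Fn_subset_C: "Fn n \<subseteq> C"
  using Fn_subset_F2 F2_subset_C by blast

lemma \<delta>_pos: "0 < \<delta>"
  unfolding \<delta>_def using cstar_subalgebra_C u_notin_C
  by (intro infdist_pos_not_in_closed) (auto simp: cstar_subalgebra_def)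

lemma \<delta>_le_norm_upow_P_diff: "z \<in> C \<Longrightarrow> \<delta> \<le> norm (upow u (2 ^ n) * P n - z)"
proof -
  assume z: "z \<in> C"
  define e where "e = E n 0 (2 ^ n - 1)"
  obtain R where R: "R \<in> Fn n" "u = R + upow u (2 ^ n) * P n * e"
    using u_eq_Fn_add_wrap unfolding e_def by blast
  have "e \<in> C" using Fn_subset_C E_in_Fn[of 0 n "2 ^ n - 1"] unfolding e_def by auto
  then have "R + z * e \<in> C" using Fn_subset_C R(1) z by (blast intro: C_add C_mult)
  then have "\<delta> \<le> dist u (R + z * e)" unfolding \<delta>_def by (rule infdist_le)
  also have "\<dots> = norm ((upow u (2 ^ n) * P n - z) * e)"
    unfolding dist_norm by (subst R(2)) (simp add: algebra_simps)
  also have "\<dots> \<le> norm (upow u (2 ^ n) * P n - z) * norm e" by (rule norm_mult_ineq)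
  also have "\<dots> \<le> norm (upow u (2 ^ n) * P n - z)"
    using norm_E[of n 0 "2 ^ n - 1"] unfolding e_def by (simp add: mult_left_le)
  finally show ?thesis .
qed

text \<open>
  Each matrix coefficient \<open>r M t = c P_n\<close> of \<open>M\<close> gives the element \<open>r z t / c\<close> of \<open>C\<close> within
  \<open>\<epsilon> / |c|\<close> of \<open>u^(2^n) P_n\<close>, so \<open>|c| \<le> \<epsilon> / \<delta>\<close>.
\<close>
lemma norm_le_if_close_to_C:
  assumes z: "z \<in> C" and M: "M \<in> Fn n" and close: "norm (z - upow u (2 ^ n) * M) \<le> \<epsilon>"
  shows "norm M \<le> \<epsilon> / \<delta>"
proof (rule norm_le_corner_bound[OF M corner_boundI])
  fix r t assume r: "r \<in> Fn n" "P n * r = r" "norm r \<le> 1" and t: "t \<in> Fn n" "t * P n = t" "norm t \<le> 1"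
  obtain c where c: "r * M * t = scaleC c (P n)"
    using corner_Fn_scalar[OF Fn_mult[OF Fn_mult[OF r(1) M] t(1)]] r(2) t(2) by (metis mult.assoc)
  have "r * z * t \<in> C"
    using C_mult[OF C_mult[OF subsetD[OF Fn_subset_C r(1)] z] subsetD[OF Fn_subset_C t(1)]] .
  have "r * (upow u (2 ^ n) * M) * t = (r * upow u (2 ^ n)) * M * t" by (simp only: mult.assoc)
  also have "r * upow u (2 ^ n) = upow u (2 ^ n) * r" using Fn_upow_commute[OF r(1), of 1] by simp
  finally have "r * (upow u (2 ^ n) * M) * t = upow u (2 ^ n) * (r * M * t)" by (simp only: mult.assoc)
  then have "r * (z - upow u (2 ^ n) * M) * t = r * z * t - scaleC c (upow u (2 ^ n) * P n)"
    by (simp add: c right_diff_distrib left_diff_distrib mult_scaleC_right)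
  moreover have "norm (r * (z - upow u (2 ^ n) * M) * t) \<le> \<epsilon>"
    using norm_sandwich_le[OF r(3) t(3)] close by (rule order_trans)
  ultimately have near: "norm (r * z * t - scaleC c (upow u (2 ^ n) * P n)) \<le> \<epsilon>" by simp
  have "cmod c \<le> \<epsilon> / \<delta>"
  proof (cases "c = 0")
    case True
    then show ?thesis using order_trans[OF norm_ge_zero near] \<delta>_pos by simp
  next
    case False
    have "scaleC (1 / c) (r * z * t) \<in> C"
      using \<open>r * z * t \<in> C\<close> cstar_subalgebra_C by (simp add: cstar_subalgebra_def)
    then have "\<delta> \<le> norm (upow u (2 ^ n) * P n - scaleC (1 / c) (r * z * t))" by (rule \<delta>_le_norm_upow_P_diff)
    also have "\<dots> = norm (r * z * t - scaleC c (upow u (2 ^ n) * P n)) / cmod c"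
    proof -
      have "upow u (2 ^ n) * P n - scaleC (1 / c) (r * z * t) =
          scaleC (1 / c) (scaleC c (upow u (2 ^ n) * P n) - r * z * t)"
        using False by (simp add: scaleC_diff_right scaleC_scaleC)
      then show ?thesis by (simp add: norm_scaleC norm_divide norm_minus_commute)
    qed
    also have "\<dots> \<le> \<epsilon> / cmod c" using near False by (simp add: divide_right_mono)
    finally show ?thesis using False \<delta>_pos by (simp add: field_simps)
  qed
  moreover have "cmod c * norm (P n) \<le> cmod c" using norm_P[of n] by (simp add: mult_left_le)
  ultimately show "norm (r * M * t) \<le> \<epsilon> / \<delta>" unfolding c norm_scaleC by linarith
qed

lemma norm_Phead_Ptail_le:
  assumes x: "x \<in> C" and y: "y \<in> Band n" and close: "norm (x - y) \<le> \<epsilon>"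
  shows "norm (Phead n * y * Ptail n) \<le> \<epsilon> / \<delta>"
proof -
  define X where "X = Phead n * y * Ptail n"
  define M where "M = upow u (- (2 ^ n)) * X"
  have M: "M \<in> Fn n" using y by (simp add: Band_def M_def X_def)
  have yM: "X = upow u (2 ^ n) * M"
    unfolding M_def by (simp add: upow_inverse flip: mult.assoc)
  have P: "norm (Phead n) \<le> 1" "norm (Ptail n) \<le> 1"
    unfolding Phead_def Ptail_def by (simp_all add: norm_diag_proj)
  have Pin: "Phead n \<in> C" "Ptail n \<in> C"
    using Fn_subset_C diag_proj_in_Fn unfolding Phead_def Ptail_def by auto
  have "norm M \<le> \<epsilon> / \<delta>"
  proof (rule norm_le_if_close_to_C[OF _ M])
    show "Phead n * x * Ptail n \<in> C" using Pin x by (blast intro: C_mult)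
    have "Phead n * x * Ptail n - upow u (2 ^ n) * M = Phead n * (x - y) * Ptail n"
      by (simp add: yM[symmetric] X_def algebra_simps)
    also have "norm \<dots> \<le> \<epsilon>" using norm_sandwich_le[OF P] close by (rule order_trans)
    finally show "norm (Phead n * x * Ptail n - upow u (2 ^ n) * M) \<le> \<epsilon>" .
  qed
  moreover have "norm (upow u (2 ^ n) * M) \<le> norm M"
    using norm_mult_ineq[of "upow u (2 ^ n)" M] norm_upow[of "2 ^ n"]
    by (metis mult_left_le_one_le norm_ge_zero order_trans)
  ultimately have "norm X \<le> \<epsilon> / \<delta>" unfolding yM by linarith
  then show ?thesis unfolding X_def .
qed

lemma close_to_Fn_if_close_to_Band:
  assumes x: "x \<in> C" and y: "y \<in> Band n" and close: "norm (x - y) \<le> \<epsilon>"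
  shows "\<exists>y0\<in>Fn n. norm (x - y0) \<le> \<epsilon> + 2 * \<epsilon> / \<delta>"
proof
  let ?y0 = "y - Phead n * y * Ptail n - Ptail n * y * Phead n"
  show "?y0 \<in> Fn n" using y by (simp add: Band_def)
  have cadj_PQ: "cadj (Phead n) = Phead n" "cadj (Ptail n) = Ptail n"
    unfolding Phead_def Ptail_def by (simp_all add: cadj_diag_proj)
  have "norm (Ptail n * y * Phead n) = norm (Phead n * cadj y * Ptail n)"
    by (metis cadj_PQ cadj_mult mult.assoc norm_cadj)
  also have "\<dots> \<le> \<epsilon> / \<delta>"
    using norm_Phead_Ptail_le[OF C_cadj[OF x] Band_cadj[OF y]] close
    by (simp flip: cadj_diff)
  finally have "norm (Ptail n * y * Phead n) \<le> \<epsilon> / \<delta>" .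
  moreover have "norm (Phead n * y * Ptail n) \<le> \<epsilon> / \<delta>" by (rule norm_Phead_Ptail_le[OF x y close])
  moreover have "x - ?y0 = (x - y) + Phead n * y * Ptail n + Ptail n * y * Phead n"
    by (simp add: algebra_simps)
  then have "norm (x - ?y0) \<le> norm ((x - y) + Phead n * y * Ptail n) + norm (Ptail n * y * Phead n)"
    by (simp only: norm_triangle_ineq)
  moreover have "norm ((x - y) + Phead n * y * Ptail n) \<le> norm (x - y) + norm (Phead n * y * Ptail n)"
    by (rule norm_triangle_ineq)
  ultimately show "norm (x - ?y0) \<le> \<epsilon> + 2 * \<epsilon> / \<delta>" using close by linarith
qed

lemma C_subset_F2: "C \<subseteq> F2 u s"
proof
  fix x assume x: "x \<in> C"
  have "x \<in> closure (cspan F2_gens)" unfolding closure_approachable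
  proof (intro allI impI)
    fix e :: real assume "e > 0"
    define \<epsilon> where "\<epsilon> = e / (2 + 2 / \<delta>)"
    have "2 + 2 / \<delta> > 0" using \<delta>_pos by (simp add: add_pos_pos)
    then have "\<epsilon> > 0" unfolding \<epsilon>_def using \<open>e > 0\<close> by simp
    have "\<epsilon> + 2 * \<epsilon> / \<delta> = \<epsilon> * (1 + 2 / \<delta>)" by (simp add: field_simps)
    also have "\<dots> < \<epsilon> * (2 + 2 / \<delta>)" using \<open>\<epsilon> > 0\<close> by simp
    also have "\<dots> = e" unfolding \<epsilon>_def using \<open>2 + 2 / \<delta> > 0\<close> by simp
    finally have "\<epsilon> + 2 * \<epsilon> / \<delta> < e" .
    obtain y where y: "y \<in> cspan B2_gens" "norm (x - y) < \<epsilon>"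
      using clspan_approx[of x B2_gens \<epsilon>] C_subset_B2 x \<open>\<epsilon> > 0\<close> unfolding B2_eq by blast
    obtain n where "y \<in> Band n" using eventually_Band[OF y(1)] by (auto simp: eventually_sequentially)
    then obtain y0 where "y0 \<in> Fn n" "norm (x - y0) \<le> \<epsilon> + 2 * \<epsilon> / \<delta>"
      using close_to_Fn_if_close_to_Band[OF x _ less_imp_le[OF y(2)]] by blast
    then have "y0 \<in> cspan F2_gens" "dist y0 x < e"
      using Fn_subset_cspan_F2_gens \<open>\<epsilon> + 2 * \<epsilon> / \<delta> < e\<close> by (auto simp: dist_norm norm_minus_commute)
    then show "\<exists>y0\<in>cspan F2_gens. dist y0 x < e" by blast
  qed
  then show "x \<in> F2 u s" unfolding F2_eq clspan_def .
qed

end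

theorem theorem3p3:
  fixes u s :: "'a::cstar_algebra"
  assumes "Q2_relations u s"
  shows "cstar_subalgebra (F2 u s) \<and> cstar_subalgebra (B2 u s) \<and> F2 u s \<subset> B2 u s \<and>
         (\<forall>C. cstar_subalgebra C \<and> F2 u s \<subseteq> C \<and> C \<subseteq> B2 u s \<longrightarrow>
               C = F2 u s \<or> C = B2 u s)"
proof -
  interpret q2 u s by unfold_locales (fact assms)
  have "C = F2 u s \<or> C = B2 u s" if C: "cstar_subalgebra C" "F2 u s \<subseteq> C" "C \<subseteq> B2 u s" for C
  proof (cases "u \<in> C")
    case True
    then show ?thesis using B2_subset_if_u_mem C by blast
  next
    case False
    then interpret q2_gap u s C by unfold_locales (use C in auto)
    show ?thesis using C_subset_F2 C(2) by blast
  qed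
  moreover have "F2 u s \<subset> B2 u s" using F2_subset_B2 u_in_B2 u_notin_F2 by blast
  ultimately show ?thesis using cstar_subalgebra_F2 cstar_subalgebra_B2 by blast
qed

end
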